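(* (Explicit Rayleigh's Monotonicity Law I.) Let $\Gamma$ be a metrized graph and let $e_i$ be an edge of $\Gamma$ with end points $p_i,q_i$ and length $L_i$. If $e_i$ is not a bridge of $\Gamma$, then for any $s,t\in\Gamma-e_i$, $$r(s,t)=r_{\overline{\Gamma}_i}(s,t)+\frac{L_i+R_i}{L_iR_i}\big[j_{p_i}(q_i,s)-j_{p_i}(q_i,t)\big]^2=r_{\overline{\Gamma}_i}(s,t)+\frac{L_i}{R_i(L_i+R_i)}\big[j^{\Gamma-e_i}_{p_i}(q_i,s)-j^{\Gamma-e_i}_{p_i}(q_i,t)\big]^2.$$ In particular $r(s,t)\ge r_{\overline{\Gamma}_i}(s,t)$, with equality if and only if $j_{p_i}(q_i,s)=j_{p_i}(q_i,t)$. If $e_i$ is a bridge of $\Gamma$, then for $s,t\in\Gamma-e_i$: $r(s,t)=r_{\overline{\Gamma}_i}(s,t)$ when $s$ and $t$ lie in the same connected component of $\Gamma-e_i$, and $r(s,t)=r_{\overline{\Gamma}_i}(s,t)+L_i$ otherwise.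
   Context: A metrized graph $\Gamma$ is a finite connected graph (multiple edges and self-loops allowed) in which each edge is identified with a closed line segment of positive length. $\Gamma$ is regarded as a resistive electric circuit in which each edge is a resistor whose resistance equals its length. $r(x,y)$ is the effective resistance between $x$ and $y$; $j_z(x,y)$ is the voltage at $x$ when a unit current enters at $y$ and exits at $z$, with reference voltage $0$ at $z$. $\Gamma-e_i$ is obtained from $\Gamma$ by deleting the interior of $e_i$; $e_i$ is a bridge if $\Gamma-e_i$ is disconnected; for a non-bridge $e_i$, $R_i:=r_{\Gamma-e_i}(p_i,q_i)$. $\overline{\Gamma}_i$ is the metrized graph obtained from $\Gamma$ by contracting the edge $e_i$ to a point (so $p_i=q_i$ in $\overline{\Gamma}_i$). Subscripts/superscripts indicate the graph on which resistance/voltage functions are computed. *)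

theory Defs
  imports Complex_Main
begin

text \<open>A model of a metrized graph: finite vertex set, finite edge set (multiple edges and
self-loops allowed), each edge e has endpoints ends e = (p,q) and a positive length.
The edge e is identified with the segment [0, len e], parameter 0 at p and len e at q.\<close>

record ('v, 'e) mgraph =
  verts :: "'v set"
  edges :: "'e set"
  ends  :: "'e \<Rightarrow> 'v \<times> 'v"
  len   :: "'e \<Rightarrow> real"

text \<open>Points of the metrized graph: vertices, or interior points of edges
(Pt e a is the point at distance a from the first endpoint of e, 0 < a < len e).\<close>

datatype ('v, 'e) pt = Vtx 'v | Pt 'e real

definition wf_graph :: "('v, 'e) mgraph \<Rightarrow> bool" where
  "wf_graph G \<longleftrightarrow> finite (verts G) \<and> finite (edges G) \<and> verts G \<noteq> {} \<and>
     (\<forall>e\<in>edges G. fst (ends G e) \<in> verts G \<and> snd (ends G e) \<in> verts G \<and> len G e > 0)"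

definition points :: "('v, 'e) mgraph \<Rightarrow> ('v, 'e) pt set" where
  "points G = Vtx ` verts G \<union> {Pt e a | e a. e \<in> edges G \<and> 0 < a \<and> a < len G e}"

definition vadj :: "('v, 'e) mgraph \<Rightarrow> 'v \<Rightarrow> 'v \<Rightarrow> bool" where
  "vadj G u v \<longleftrightarrow> (\<exists>e\<in>edges G. ends G e = (u, v) \<or> ends G e = (v, u))"

definition connected_graph :: "('v, 'e) mgraph \<Rightarrow> bool" where
  "connected_graph G \<longleftrightarrow> (\<forall>u\<in>verts G. \<forall>v\<in>verts G. (vadj G)\<^sup>*\<^sup>* u v)"

definition metrized_graph :: "('v, 'e) mgraph \<Rightarrow> bool" where
  "metrized_graph G \<longleftrightarrow> wf_graph G \<and> connected_graph G"

definition edge_fun :: "('v, 'e) mgraph \<Rightarrow> (('v, 'e) pt \<Rightarrow> real) \<Rightarrow> 'e \<Rightarrow> real \<Rightarrow> real" where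
  "edge_fun G f e a =
     (if a \<le> 0 then f (Vtx (fst (ends G e)))
      else if a \<ge> len G e then f (Vtx (snd (ends G e)))
      else f (Pt e a))"

text \<open>Continuous piecewise-linear functions on the metrized graph (continuity is built in,
since the affine pieces live on closed subsegments and the values at segment ends are the
vertex values).\<close>

definition cpwl :: "('v, 'e) mgraph \<Rightarrow> (('v, 'e) pt \<Rightarrow> real) \<Rightarrow> bool" where
  "cpwl G f \<longleftrightarrow> (\<forall>e\<in>edges G. \<exists>P. finite P \<and>
     (\<forall>a b. 0 \<le> a \<and> a < b \<and> b \<le> len G e \<and> {a<..<b} \<inter> P = {} \<longrightarrow>
        (\<exists>\<alpha> \<beta>. \<forall>x\<in>{a..b}. edge_fun G f e x = \<alpha> + \<beta> * x)))"

definition dslope_right :: "(real \<Rightarrow> real) \<Rightarrow> real \<Rightarrow> real" where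
  "dslope_right g a = Lim (at_right 0) (\<lambda>h. (g (a + h) - g a) / h)"

definition dslope_left :: "(real \<Rightarrow> real) \<Rightarrow> real \<Rightarrow> real" where
  "dslope_left g a = Lim (at_right 0) (\<lambda>h. (g (a - h) - g a) / h)"

text \<open>Sum of the outgoing directional derivatives of f at a point x (= - Laplacian of f at x).
A self-loop at v contributes two directions.\<close>

definition outflux :: "('v, 'e) mgraph \<Rightarrow> (('v, 'e) pt \<Rightarrow> real) \<Rightarrow> ('v, 'e) pt \<Rightarrow> real" where
  "outflux G f x = (case x of
      Vtx v \<Rightarrow> (\<Sum>e\<in>{e\<in>edges G. fst (ends G e) = v}. dslope_right (edge_fun G f e) 0)
             + (\<Sum>e\<in>{e\<in>edges G. snd (ends G e) = v}. dslope_left (edge_fun G f e) (len G e))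
    | Pt e a \<Rightarrow> dslope_right (edge_fun G f e) a + dslope_left (edge_fun G f e) a)"

text \<open>f is the voltage function when a unit current enters at y and exits at z,
with reference voltage 0 at z: Laplacian f = delta_y - delta_z.\<close>

definition is_voltage :: "('v, 'e) mgraph \<Rightarrow> ('v, 'e) pt \<Rightarrow> ('v, 'e) pt \<Rightarrow> (('v, 'e) pt \<Rightarrow> real) \<Rightarrow> bool" where
  "is_voltage G y z f \<longleftrightarrow> cpwl G f \<and> f z = 0 \<and> (\<forall>x. x \<notin> points G \<longrightarrow> f x = 0) \<and>
     (\<forall>x\<in>points G. outflux G f x = (if x = z then 1 else 0) - (if x = y then 1 else 0))"

text \<open>jv G z x y = j_z(x,y): voltage at x when unit current enters at y and exits at z.\<close>

definition jv :: "('v, 'e) mgraph \<Rightarrow> ('v, 'e) pt \<Rightarrow> ('v, 'e) pt \<Rightarrow> ('v, 'e) pt \<Rightarrow> real" where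
  "jv G z x y = (THE f. is_voltage G y z f) x"

definition reff :: "('v, 'e) mgraph \<Rightarrow> ('v, 'e) pt \<Rightarrow> ('v, 'e) pt \<Rightarrow> real" where
  "reff G x y = jv G y x x"

definition del_edge :: "('v, 'e) mgraph \<Rightarrow> 'e \<Rightarrow> ('v, 'e) mgraph" where
  "del_edge G e = G\<lparr>edges := edges G - {e}\<rparr>"

definition is_bridge :: "('v, 'e) mgraph \<Rightarrow> 'e \<Rightarrow> bool" where
  "is_bridge G e \<longleftrightarrow> \<not> connected_graph (del_edge G e)"

definition cmap :: "('v, 'e) mgraph \<Rightarrow> 'e \<Rightarrow> 'v \<Rightarrow> 'v" where
  "cmap G e v = (if v = snd (ends G e) then fst (ends G e) else v)"

definition contract :: "('v, 'e) mgraph \<Rightarrow> 'e \<Rightarrow> ('v, 'e) mgraph" where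
  "contract G e = \<lparr>verts = cmap G e ` verts G, edges = edges G - {e},
     ends = (\<lambda>d. map_prod (cmap G e) (cmap G e) (ends G d)), len = len G\<rparr>"

definition cpt :: "('v, 'e) mgraph \<Rightarrow> 'e \<Rightarrow> ('v, 'e) pt \<Rightarrow> ('v, 'e) pt" where
  "cpt G e x = (case x of Vtx v \<Rightarrow> Vtx (cmap G e v) | Pt d a \<Rightarrow> Pt d a)"

definition anchor :: "('v, 'e) mgraph \<Rightarrow> ('v, 'e) pt \<Rightarrow> 'v" where
  "anchor G x = (case x of Vtx v \<Rightarrow> v | Pt e a \<Rightarrow> fst (ends G e))"

definition same_comp :: "('v, 'e) mgraph \<Rightarrow> ('v, 'e) pt \<Rightarrow> ('v, 'e) pt \<Rightarrow> bool" where
  "same_comp G s t \<longleftrightarrow> (vadj G)\<^sup>*\<^sup>* (anchor G s) (anchor G t)"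

end

theory Submission
  imports Defs
begin

text \<open>Voltages are treated as potentials: continuous piecewise linear functions on the graph whose
  outflux (minus the Laplacian) is the current leaving the network at each point. Green's identity
  on every edge yields reciprocity and a nonpositive energy, hence uniqueness up to constants;
  existence follows by induction on the number of edges.

  For the contraction formula let \<open>u\<close> be a potential of a unit current entering at \<open>q\<close> and
  leaving at \<open>p\<close>, with \<open>u(p) = 0\<close>. Then \<open>r(s,t)\<close> exceeds the resistance in the contracted graph
  by \<open>(j\<^sub>p(q,s) - j\<^sub>p(q,t))\<^sup>2 / u(q)\<close>, and \<open>u(s) - u(t) = j\<^sub>p(q,s) - j\<^sub>p(q,t)\<close>. If \<open>e\<close> is not
  a bridge, \<open>u\<close> is obtained from the voltage of \<open>\<Gamma> - e\<close> extended linearly along \<open>e\<close>, and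
  \<open>u(q) = L R / (L + R)\<close> since \<open>e\<close> is in parallel with \<open>\<Gamma> - e\<close>; reciprocity in \<open>\<Gamma> - e\<close> turns
  \<open>u(s) - u(t)\<close> into the voltage difference of \<open>\<Gamma> - e\<close>. If \<open>e\<close> is a bridge, \<open>u\<close> is \<open>0\<close> on the
  side of \<open>p\<close> and \<open>L\<close> on the side of \<open>q\<close>, so \<open>u(s) - u(t)\<close> is \<open>0\<close> or \<open>\<plusminus>L\<close>.\<close>

section \<open>Piecewise affine functions on an interval\<close>

definition piecewise_affine :: "real set \<Rightarrow> (real \<Rightarrow> real) \<Rightarrow> real \<Rightarrow> real \<Rightarrow> bool" where
  "piecewise_affine W \<phi> a b \<longleftrightarrow> (\<forall>c d. a \<le> c \<and> c < d \<and> d \<le> b \<and> {c<..<d} \<inter> W = {} \<longrightarrow>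
     (\<exists>\<alpha> \<beta>. \<forall>x\<in>{c..d}. \<phi> x = \<alpha> + \<beta> * x))"

lemma piecewise_affine_piece:
  assumes "piecewise_affine W \<phi> a b" "a \<le> c" "c < d" "d \<le> b" "{c<..<d} \<inter> W = {}"
  shows "\<exists>\<alpha> \<beta>. \<forall>x\<in>{c..d}. \<phi> x = \<alpha> + \<beta> * x"
  using assms unfolding piecewise_affine_def by simp

lemma piecewise_affine_mono:
  "piecewise_affine W \<phi> a b \<Longrightarrow> W \<subseteq> W' \<Longrightarrow> piecewise_affine W' \<phi> a b"
  unfolding piecewise_affine_def by blast

lemma piecewise_affine_affine:
  assumes "\<forall>x\<in>{a..b}. \<phi> x = \<alpha> + \<beta> * x"
  shows "piecewise_affine W \<phi> a b"
  unfolding piecewise_affine_def using assms by (metis atLeastAtMost_iff order_trans)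

lemma piecewise_affine_two_pieces:
  assumes "\<forall>x\<in>{l..m}. \<phi> x = \<alpha> + \<beta> * x" "\<forall>x\<in>{m..u}. \<phi> x = \<gamma> + \<delta> * x"
  shows "piecewise_affine {m} \<phi> l u"
  unfolding piecewise_affine_def
proof (intro allI impI)
  fix c d assume cd: "l \<le> c \<and> c < d \<and> d \<le> u \<and> {c<..<d} \<inter> {m} = {}"
  then have "d \<le> m \<or> m \<le> c" by auto
  then show "\<exists>\<alpha> \<beta>. \<forall>x\<in>{c..d}. \<phi> x = \<alpha> + \<beta> * x"
  proof
    assume "d \<le> m"
    with assms(1) cd have "\<forall>x\<in>{c..d}. \<phi> x = \<alpha> + \<beta> * x" by auto
    then show ?thesis by blast
  next
    assume "m \<le> c"
    with assms(2) cd have "\<forall>x\<in>{c..d}. \<phi> x = \<gamma> + \<delta> * x" by auto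
    then show ?thesis by blast
  qed
qed

lemma piecewise_affine_lincomb:
  assumes "piecewise_affine W \<phi> l u" "piecewise_affine W \<psi> l u"
  shows "piecewise_affine W (\<lambda>x. a * \<phi> x + b * \<psi> x) l u"
  unfolding piecewise_affine_def
proof (intro allI impI)
  fix c d assume cd: "l \<le> c \<and> c < d \<and> d \<le> u \<and> {c<..<d} \<inter> W = {}"
  obtain \<alpha> \<beta> \<gamma> \<delta> where "\<forall>x\<in>{c..d}. \<phi> x = \<alpha> + \<beta> * x" "\<forall>x\<in>{c..d}. \<psi> x = \<gamma> + \<delta> * x"
    using piecewise_affine_piece[OF assms(1)] piecewise_affine_piece[OF assms(2)] cd by meson
  then have "\<forall>x\<in>{c..d}. a * \<phi> x + b * \<psi> x = (a * \<alpha> + b * \<gamma>) + (a * \<beta> + b * \<delta>) * x"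
    by (simp add: algebra_simps)
  then show "\<exists>\<alpha> \<beta>. \<forall>x\<in>{c..d}. a * \<phi> x + b * \<psi> x = \<alpha> + \<beta> * x" by blast
qed

lemma piecewise_affine_reflect:
  assumes "piecewise_affine W \<phi> a b"
  shows "piecewise_affine (uminus ` W) (\<lambda>x. \<phi> (- x)) (- b) (- a)"
  unfolding piecewise_affine_def
proof (intro allI impI)
  fix c d assume cd: "- b \<le> c \<and> c < d \<and> d \<le> - a \<and> {c<..<d} \<inter> uminus ` W = {}"
  have "{- d<..<- c} \<inter> W = {}"
  proof (rule equals0I)
    fix y assume "y \<in> {- d<..<- c} \<inter> W"
    then have "- y \<in> {c<..<d} \<inter> uminus ` W" by auto
    with cd show False by blast
  qed
  moreover have "a \<le> - d" "- d < - c" "- c \<le> b" using cd by auto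
  ultimately obtain \<alpha> \<beta> where "\<forall>x\<in>{- d..- c}. \<phi> x = \<alpha> + \<beta> * x"
    using assms unfolding piecewise_affine_def by blast
  then have "\<forall>x\<in>{c..d}. \<phi> (- x) = \<alpha> + (- \<beta>) * x" by auto
  then show "\<exists>\<alpha> \<beta>. \<forall>x\<in>{c..d}. \<phi> (- x) = \<alpha> + \<beta> * x" by blast
qed

lemma finite_gap_right:
  fixes W :: "real set"
  assumes "finite W" "x < b"
  obtains b' where "x < b'" "b' \<le> b" "{x<..<b'} \<inter> W = {}"
proof
  let ?m = "Min (insert b {y\<in>W. x < y})"
  have fin: "finite (insert b {y\<in>W. x < y})" using assms(1) by simp
  show "x < ?m" using fin assms(2) by (subst Min_gr_iff) auto
  show "?m \<le> b" using fin by (intro Min_le) auto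
  have "?m \<le> y" if "y \<in> W" "x < y" for y using fin that by (intro Min_le) auto
  then show "{x<..<?m} \<inter> W = {}" by fastforce
qed

lemma piecewise_affine_right_piece:
  assumes "finite W" "l \<le> x" "x < u"
  obtains b' where "x < b'" "b' \<le> u"
    "\<And>\<phi>. piecewise_affine W \<phi> l u \<Longrightarrow> \<exists>\<alpha> \<beta>. \<forall>y\<in>{x..b'}. \<phi> y = \<alpha> + \<beta> * y"
proof -
  obtain b' where "x < b'" "b' \<le> u" "{x<..<b'} \<inter> W = {}" using finite_gap_right[OF assms(1,3)] .
  with assms(2) show thesis by (intro that[of b']) (auto simp: piecewise_affine_def)
qed

lemma dslope_right_affine:
  assumes "a \<le> x" "x < b" "\<forall>y\<in>{a..b}. \<phi> y = \<alpha> + \<beta> * y"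
  shows "dslope_right \<phi> x = \<beta>"
proof -
  have "\<forall>\<^sub>F h in at_right 0. (\<phi> (x + h) - \<phi> x) / h = \<beta>"
    unfolding eventually_at_right_field
  proof (intro exI[of _ "b - x"] conjI allI impI)
    fix h :: real assume "0 < h" "h < b - x"
    then have "\<phi> (x + h) - \<phi> x = \<beta> * h" using assms by (simp add: algebra_simps)
    then show "(\<phi> (x + h) - \<phi> x) / h = \<beta>" using \<open>0 < h\<close> by simp
  qed (use assms in auto)
  then show ?thesis unfolding dslope_right_def by (intro tendsto_Lim) (auto intro: tendsto_eventually)
qed

lemma dslope_left_reflect: "dslope_left \<phi> x = dslope_right (\<lambda>y. \<phi> (- y)) (- x)"
  unfolding dslope_left_def dslope_right_def by simp

lemma dslope_left_affine:
  assumes "a < x" "x \<le> b" "\<forall>y\<in>{a..b}. \<phi> y = \<alpha> + \<beta> * y"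
  shows "dslope_left \<phi> x = - \<beta>"
  unfolding dslope_left_reflect using assms by (intro dslope_right_affine[of "- b" _ "- a" _ \<alpha>]) auto

lemma dslope_right_lincomb:
  assumes "finite W" "piecewise_affine W \<phi> l u" "piecewise_affine W \<psi> l u" "l \<le> x" "x < u"
  shows "dslope_right (\<lambda>y. a * \<phi> y + b * \<psi> y) x = a * dslope_right \<phi> x + b * dslope_right \<psi> x"
proof -
  obtain b' where b': "x < b'" and pieces:
    "\<And>\<phi>. piecewise_affine W \<phi> l u \<Longrightarrow> \<exists>\<alpha> \<beta>. \<forall>y\<in>{x..b'}. \<phi> y = \<alpha> + \<beta> * y"
    using piecewise_affine_right_piece[OF assms(1,4,5)] by metis
  obtain \<alpha> \<beta> \<gamma> \<delta> where \<phi>: "\<forall>y\<in>{x..b'}. \<phi> y = \<alpha> + \<beta> * y"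
    and \<psi>: "\<forall>y\<in>{x..b'}. \<psi> y = \<gamma> + \<delta> * y"
    using pieces assms(2,3) by meson
  have "\<forall>y\<in>{x..b'}. a * \<phi> y + b * \<psi> y = (a * \<alpha> + b * \<gamma>) + (a * \<beta> + b * \<delta>) * y"
    using \<phi> \<psi> by (simp add: algebra_simps)
  from dslope_right_affine[OF _ b' this] show ?thesis
    using dslope_right_affine[OF _ b' \<phi>] dslope_right_affine[OF _ b' \<psi>] by simp
qed

lemma dslope_left_lincomb:
  assumes "finite W" "piecewise_affine W \<phi> l u" "piecewise_affine W \<psi> l u" "l < x" "x \<le> u"
  shows "dslope_left (\<lambda>y. a * \<phi> y + b * \<psi> y) x = a * dslope_left \<phi> x + b * dslope_left \<psi> x"
  unfolding dslope_left_reflect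
  using dslope_right_lincomb[OF _ piecewise_affine_reflect[OF assms(2)] piecewise_affine_reflect[OF assms(3)]]
    assms(1,4,5) by simp

text \<open>Integrating by parts on each affine piece, \<open>green_form W \<phi> \<psi> a b\<close> is
  \<open>- \<integral>\<^sub>a\<^sup>b \<phi>' \<psi>'\<close> as soon as \<open>W\<close> contains the breakpoints of \<open>\<phi>\<close> and \<open>\<psi>\<close>.\<close>

definition green_form :: "real set \<Rightarrow> (real \<Rightarrow> real) \<Rightarrow> (real \<Rightarrow> real) \<Rightarrow> real \<Rightarrow> real \<Rightarrow> real" where
  "green_form W \<phi> \<psi> a b = \<psi> a * dslope_right \<phi> a + \<psi> b * dslope_left \<phi> b +
     (\<Sum>x\<in>W \<inter> {a<..<b}. \<psi> x * (dslope_right \<phi> x + dslope_left \<phi> x))"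

lemma green_form_split:
  assumes "finite W" "c \<in> W" "a < c" "c < b"
  shows "green_form W \<phi> \<psi> a b = green_form W \<phi> \<psi> a c + green_form W \<phi> \<psi> c b"
proof -
  let ?t = "\<lambda>x. \<psi> x * (dslope_right \<phi> x + dslope_left \<phi> x)"
  have "W \<inter> {a<..<b} = insert c ((W \<inter> {a<..<c}) \<union> (W \<inter> {c<..<b}))"
    using assms by auto
  moreover have "(W \<inter> {a<..<c}) \<inter> (W \<inter> {c<..<b}) = {}" by auto
  ultimately have "sum ?t (W \<inter> {a<..<b}) = ?t c + sum ?t (W \<inter> {a<..<c}) + sum ?t (W \<inter> {c<..<b})"
    using assms(1) by (simp add: sum.union_disjoint)
  then show ?thesis unfolding green_form_def by (simp add: algebra_simps)
qed

lemma green_form_affine: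
  assumes "a < b" "{a<..<b} \<inter> W = {}"
    and "\<forall>x\<in>{a..b}. \<phi> x = \<alpha> + \<beta> * x" "\<forall>x\<in>{a..b}. \<psi> x = \<gamma> + \<delta> * x"
  shows "green_form W \<phi> \<psi> a b = - (\<beta> * \<delta> * (b - a))"
proof -
  have "W \<inter> {a<..<b} = {}" using assms(2) by blast
  moreover have "dslope_right \<phi> a = \<beta>" "dslope_left \<phi> b = - \<beta>"
    using dslope_right_affine[OF _ _ assms(3)] dslope_left_affine[OF _ _ assms(3)] assms(1) by auto
  moreover have "\<psi> a = \<gamma> + \<delta> * a" "\<psi> b = \<gamma> + \<delta> * b" using assms(1,4) by auto
  ultimately show ?thesis unfolding green_form_def by (simp add: algebra_simps)
qed

lemma finite_breakpoints_induct [consumes 2, case_names piece split]: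
  fixes W :: "real set"
  assumes "finite W" "a < b"
    and piece: "\<And>c d. a \<le> c \<Longrightarrow> c < d \<Longrightarrow> d \<le> b \<Longrightarrow> {c<..<d} \<inter> W = {} \<Longrightarrow> P c d"
    and split: "\<And>c m d. a \<le> c \<Longrightarrow> c < m \<Longrightarrow> m < d \<Longrightarrow> d \<le> b \<Longrightarrow> m \<in> W \<Longrightarrow>
                  P c m \<Longrightarrow> P m d \<Longrightarrow> P c d"
  shows "P a b"
proof -
  have "P c d" if "a \<le> c" "c < d" "d \<le> b" for c d
    using that
  proof (induction "card (W \<inter> {c<..<d})" arbitrary: c d rule: less_induct)
    case less
    show ?case
    proof (cases "{c<..<d} \<inter> W = {}")
      case True
      then show ?thesis using less.prems by (rule piece[rotated 3])
    next
      case False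
      then obtain m where m: "m \<in> W" "c < m" "m < d" by auto
      have "W \<inter> {c<..<m} \<subset> W \<inter> {c<..<d}" "W \<inter> {m<..<d} \<subset> W \<inter> {c<..<d}"
        using m by auto
      then have "card (W \<inter> {c<..<m}) < card (W \<inter> {c<..<d})" "card (W \<inter> {m<..<d}) < card (W \<inter> {c<..<d})"
        using assms(1) by (simp_all add: psubset_card_mono)
      then have "P c m" "P m d" using less.hyps less.prems m by simp_all
      with less.prems m show ?thesis using split[of c m d] by simp
    qed
  qed
  with assms(2) show ?thesis by simp
qed

lemma green_form_sym:
  assumes "finite W" "a < b" "piecewise_affine W \<phi> a b" "piecewise_affine W \<psi> a b"
  shows "green_form W \<phi> \<psi> a b = green_form W \<psi> \<phi> a b"
  using assms(1,2)
proof (induction rule: finite_breakpoints_induct)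
  case (piece c d)
  obtain \<alpha> \<beta> \<gamma> \<delta> where \<phi>: "\<forall>x\<in>{c..d}. \<phi> x = \<alpha> + \<beta> * x" and \<psi>: "\<forall>x\<in>{c..d}. \<psi> x = \<gamma> + \<delta> * x"
    using piecewise_affine_piece[OF assms(3) piece] piecewise_affine_piece[OF assms(4) piece] by blast
  show ?case
    using green_form_affine[OF piece(2,4) \<phi> \<psi>] green_form_affine[OF piece(2,4) \<psi> \<phi>] by simp
next
  case (split c m d)
  then show ?case by (simp add: green_form_split[OF assms(1)])
qed

lemma green_form_self:
  assumes "finite W" "a < b" "piecewise_affine W \<phi> a b"
  shows "green_form W \<phi> \<phi> a b \<le> 0 \<and> (green_form W \<phi> \<phi> a b = 0 \<longrightarrow> (\<forall>x\<in>{a..b}. \<phi> x = \<phi> a))"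
  using assms(1,2)
proof (induction rule: finite_breakpoints_induct)
  case (piece c d)
  obtain \<alpha> \<beta> where \<phi>: "\<forall>x\<in>{c..d}. \<phi> x = \<alpha> + \<beta> * x"
    using piecewise_affine_piece[OF assms(3) piece] by blast
  have g: "green_form W \<phi> \<phi> c d = - (\<beta> * \<beta> * (d - c))"
    by (rule green_form_affine[OF piece(2,4) \<phi> \<phi>])
  show ?case
  proof (intro conjI impI ballI)
    show "green_form W \<phi> \<phi> c d \<le> 0" unfolding g using piece(2) by simp
    fix x assume "green_form W \<phi> \<phi> c d = 0" "x \<in> {c..d}"
    moreover from this have "\<beta> = 0" unfolding g using piece(2) by simp
    ultimately show "\<phi> x = \<phi> c" using \<phi> piece(2) by simp
  qed
next
  case (split c m d)
  have g: "green_form W \<phi> \<phi> c d = green_form W \<phi> \<phi> c m + green_form W \<phi> \<phi> m d"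
    by (rule green_form_split[OF assms(1) split(5,2,3)])
  note left = split(6) and right = split(7)
  show ?case
  proof (intro conjI impI ballI)
    show "green_form W \<phi> \<phi> c d \<le> 0" using g left[THEN conjunct1] right[THEN conjunct1] by linarith
    fix x assume "green_form W \<phi> \<phi> c d = 0" and x: "x \<in> {c..d}"
    then have "green_form W \<phi> \<phi> c m = 0" "green_form W \<phi> \<phi> m d = 0"
      using g left[THEN conjunct1] right[THEN conjunct1] by linarith+
    then have left: "\<forall>y\<in>{c..m}. \<phi> y = \<phi> c" and right: "\<forall>y\<in>{m..d}. \<phi> y = \<phi> m"
      using left[THEN conjunct2] right[THEN conjunct2] by blast+
    show "\<phi> x = \<phi> c"
    proof (cases "x \<le> m")
      case True
      with x have "x \<in> {c..m}" by simp
      with left show ?thesis by blast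
    next
      case False
      with x have "x \<in> {m..d}" by simp
      with right have "\<phi> x = \<phi> m" by blast
      moreover have "m \<in> {c..m}" using split(2) by simp
      with left have "\<phi> m = \<phi> c" by blast
      ultimately show ?thesis by simp
    qed
  qed
qed

section \<open>Potentials on a metrized graph\<close>

lemma wf_graph_edgeD:
  assumes "wf_graph G" "d \<in> edges G"
  shows "0 < len G d" "fst (ends G d) \<in> verts G" "snd (ends G d) \<in> verts G"
  using assms unfolding wf_graph_def by auto

lemma wf_graph_finite: "wf_graph G \<Longrightarrow> finite (edges G)" "wf_graph G \<Longrightarrow> finite (verts G)"
  unfolding wf_graph_def by auto

lemma Vtx_in_points_iff [simp]: "Vtx v \<in> points G \<longleftrightarrow> v \<in> verts G"
  unfolding points_def by auto

lemma Pt_in_points_iff [simp]: "Pt d a \<in> points G \<longleftrightarrow> d \<in> edges G \<and> 0 < a \<and> a < len G d"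
  unfolding points_def by auto

lemma points_cases [consumes 1, case_names Vtx Pt]:
  assumes "x \<in> points G"
  obtains v where "x = Vtx v" "v \<in> verts G"
    | d a where "x = Pt d a" "d \<in> edges G" "0 < a" "a < len G d"
  using assms unfolding points_def by auto

lemma edge_fun_0 [simp]: "edge_fun G f d 0 = f (Vtx (fst (ends G d)))"
  unfolding edge_fun_def by simp

lemma edge_fun_len [simp]: "0 < len G d \<Longrightarrow> edge_fun G f d (len G d) = f (Vtx (snd (ends G d)))"
  unfolding edge_fun_def by simp

lemma edge_fun_interior [simp]: "0 < a \<Longrightarrow> a < len G d \<Longrightarrow> edge_fun G f d a = f (Pt d a)"
  unfolding edge_fun_def by simp

lemma edge_fun_lincomb:
  "edge_fun G (\<lambda>x. a * f x + b * g x) d = (\<lambda>y. a * edge_fun G f d y + b * edge_fun G g d y)"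
  unfolding edge_fun_def by auto

lemma cpwl_iff_piecewise_affine:
  "cpwl G f \<longleftrightarrow> (\<forall>d\<in>edges G. \<exists>W. finite W \<and> piecewise_affine W (edge_fun G f d) 0 (len G d))"
  unfolding cpwl_def piecewise_affine_def by simp

lemma cpwl_common_breakpoints:
  assumes "cpwl G f" "cpwl G g" "finite S"
  obtains W where "\<forall>d\<in>edges G. finite (W d) \<and> {a. Pt d a \<in> S} \<subseteq> W d \<and>
      piecewise_affine (W d) (edge_fun G f d) 0 (len G d) \<and> piecewise_affine (W d) (edge_fun G g d) 0 (len G d)"
proof -
  have "\<exists>W. finite W \<and> {a. Pt d a \<in> S} \<subseteq> W \<and>
      piecewise_affine W (edge_fun G f d) 0 (len G d) \<and> piecewise_affine W (edge_fun G g d) 0 (len G d)"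
    if "d \<in> edges G" for d
  proof -
    obtain P Q where "finite P" "piecewise_affine P (edge_fun G f d) 0 (len G d)"
      "finite Q" "piecewise_affine Q (edge_fun G g d) 0 (len G d)"
      using assms(1,2) \<open>d \<in> edges G\<close> unfolding cpwl_iff_piecewise_affine by meson
    moreover have "finite {a. Pt d a \<in> S}"
      using finite_vimageI[OF assms(3), of "Pt d"] by (simp add: vimage_def inj_def)
    ultimately show ?thesis
      by (intro exI[of _ "P \<union> Q \<union> {a. Pt d a \<in> S}"]) (auto elim: piecewise_affine_mono)
  qed
  then show thesis using that by metis
qed

definition vertex_slope :: "('v, 'e) mgraph \<Rightarrow> (('v, 'e) pt \<Rightarrow> real) \<Rightarrow> 'v \<Rightarrow> 'e \<Rightarrow> real" where
  "vertex_slope G f v d =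
     (if fst (ends G d) = v then dslope_right (edge_fun G f d) 0 else 0) +
     (if snd (ends G d) = v then dslope_left (edge_fun G f d) (len G d) else 0)"

lemma vertex_slope_cong: "edge_fun G f d = edge_fun G g d \<Longrightarrow> vertex_slope G f v d = vertex_slope G g v d"
  unfolding vertex_slope_def by metis

lemma outflux_Vtx: "finite (edges G) \<Longrightarrow> outflux G f (Vtx v) = (\<Sum>d\<in>edges G. vertex_slope G f v d)"
  unfolding outflux_def vertex_slope_def by (simp add: sum.inter_filter sum.distrib)

lemma outflux_Pt: "outflux G f (Pt d a) = dslope_right (edge_fun G f d) a + dslope_left (edge_fun G f d) a"
  unfolding outflux_def by simp

lemma vertex_slope_affine:
  assumes "0 < len G d" "\<forall>y\<in>{0..len G d}. edge_fun G f d y = \<alpha> + \<beta> * y"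
  shows "vertex_slope G f v d = (if fst (ends G d) = v then \<beta> else 0) - (if snd (ends G d) = v then \<beta> else 0)"
  using dslope_right_affine[OF _ assms(1,2)] dslope_left_affine[OF assms(1) _ assms(2)]
  unfolding vertex_slope_def by simp

lemma outflux_Pt_affine:
  assumes "l < a" "a < u" "\<forall>y\<in>{l..u}. edge_fun G f d y = \<alpha> + \<beta> * y"
  shows "outflux G f (Pt d a) = 0"
  using dslope_right_affine[OF less_imp_le[OF assms(1)] assms(2,3)] dslope_left_affine[OF assms(1) _ assms(3)] assms(2)
  unfolding outflux_Pt by simp

text \<open>\<open>c x\<close> is the current leaving the network at \<open>x\<close>, i.e.\ \<open>c = - \<Delta> f\<close>; \<open>dipole y z\<close> is a unit
  current entering at \<open>y\<close> and leaving at \<open>z\<close>.\<close>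

definition has_outflux :: "('v, 'e) mgraph \<Rightarrow> (('v, 'e) pt \<Rightarrow> real) \<Rightarrow> (('v, 'e) pt \<Rightarrow> real) \<Rightarrow> bool" where
  "has_outflux G f c \<longleftrightarrow> cpwl G f \<and> (\<forall>x. x \<notin> points G \<longrightarrow> f x = 0) \<and> (\<forall>x\<in>points G. outflux G f x = c x)"

definition dipole :: "'a \<Rightarrow> 'a \<Rightarrow> 'a \<Rightarrow> real" where
  "dipole y z x = (if x = z then 1 else 0) - (if x = y then 1 else 0)"

lemma dipole_self [simp]: "dipole y y = (\<lambda>_. 0)"
  unfolding dipole_def by auto

lemma dipole_add: "dipole x y w + dipole y z w = dipole x z w"
  unfolding dipole_def by simp

lemma is_voltage_iff: "is_voltage G y z f \<longleftrightarrow> has_outflux G f (dipole y z) \<and> f z = 0"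
  unfolding is_voltage_def has_outflux_def dipole_def by auto

lemma has_outfluxD:
  assumes "has_outflux G f c"
  shows "cpwl G f" "x \<notin> points G \<Longrightarrow> f x = 0" "x \<in> points G \<Longrightarrow> outflux G f x = c x"
  using assms unfolding has_outflux_def by auto

lemma has_outflux_cong:
  "has_outflux G f c \<Longrightarrow> (\<And>x. x \<in> points G \<Longrightarrow> c x = c' x) \<Longrightarrow> has_outflux G f c'"
  unfolding has_outflux_def by auto

lemma has_outflux_lincomb:
  assumes "wf_graph G" "has_outflux G f c" "has_outflux G g c'"
  shows "has_outflux G (\<lambda>x. a * f x + b * g x) (\<lambda>x. a * c x + b * c' x)"
proof -
  obtain W where W: "\<forall>d\<in>edges G. finite (W d) \<and>
      piecewise_affine (W d) (edge_fun G f d) 0 (len G d) \<and> piecewise_affine (W d) (edge_fun G g d) 0 (len G d)"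
    using cpwl_common_breakpoints[OF has_outfluxD(1)[OF assms(2)] has_outfluxD(1)[OF assms(3)] finite.emptyI]
    by (metis (no_types, lifting))
  have "cpwl G (\<lambda>x. a * f x + b * g x)"
    unfolding cpwl_iff_piecewise_affine edge_fun_lincomb using W by (blast intro: piecewise_affine_lincomb)
  moreover have "outflux G (\<lambda>x. a * f x + b * g x) x = a * outflux G f x + b * outflux G g x"
    if "x \<in> points G" for x
  proof -
    have R: "dslope_right (edge_fun G (\<lambda>x. a * f x + b * g x) d) y =
        a * dslope_right (edge_fun G f d) y + b * dslope_right (edge_fun G g d) y"
      if "d \<in> edges G" "0 \<le> y" "y < len G d" for d y
      unfolding edge_fun_lincomb using W that(1) by (intro dslope_right_lincomb[of "W d" _ 0 "len G d"] that(2,3)) auto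
    have L: "dslope_left (edge_fun G (\<lambda>x. a * f x + b * g x) d) y =
        a * dslope_left (edge_fun G f d) y + b * dslope_left (edge_fun G g d) y"
      if "d \<in> edges G" "0 < y" "y \<le> len G d" for d y
      unfolding edge_fun_lincomb using W that(1) by (intro dslope_left_lincomb[of "W d" _ 0 "len G d"] that(2,3)) auto
    from \<open>x \<in> points G\<close> show ?thesis
    proof (cases rule: points_cases)
      case (Vtx v)
      have "vertex_slope G (\<lambda>x. a * f x + b * g x) v d = a * vertex_slope G f v d + b * vertex_slope G g v d"
        if "d \<in> edges G" for d
        using R[OF that] L[OF that] wf_graph_edgeD(1)[OF assms(1) that]
        unfolding vertex_slope_def by (simp add: algebra_simps)
      then show ?thesis
        unfolding Vtx outflux_Vtx[OF wf_graph_finite(1)[OF assms(1)]]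
        by (simp add: sum.distrib sum_distrib_left)
    next
      case (Pt d y)
      then show ?thesis using R[of d y] L[of d y] by (simp add: outflux_Pt algebra_simps)
    qed
  qed
  ultimately show ?thesis
    using assms(2,3) unfolding has_outflux_def by auto
qed

lemma has_outflux_add:
  "wf_graph G \<Longrightarrow> has_outflux G f c \<Longrightarrow> has_outflux G g c' \<Longrightarrow>
    has_outflux G (\<lambda>x. f x + g x) (\<lambda>x. c x + c' x)"
  using has_outflux_lincomb[of G f c g c' 1 1] by simp

lemma has_outflux_diff:
  "wf_graph G \<Longrightarrow> has_outflux G f c \<Longrightarrow> has_outflux G g c' \<Longrightarrow>
    has_outflux G (\<lambda>x. f x - g x) (\<lambda>x. c x - c' x)"
  using has_outflux_lincomb[of G f c g c' 1 "-1"] by simp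

lemma has_outflux_scale:
  "wf_graph G \<Longrightarrow> has_outflux G f c \<Longrightarrow> has_outflux G (\<lambda>x. k * f x) (\<lambda>x. k * c x)"
  using has_outflux_lincomb[of G f c f c k 0] by simp

lemma has_outflux_edgewise_affine:
  assumes "wf_graph G"
    and affine: "\<And>d. d \<in> edges G \<Longrightarrow> \<forall>y\<in>{0..len G d}. edge_fun G f d y = \<alpha> d + \<beta> d * y"
    and outside: "\<And>x. x \<notin> points G \<Longrightarrow> f x = 0"
  shows "has_outflux G f (\<lambda>x. case x of
      Vtx v \<Rightarrow> \<Sum>d\<in>edges G. (if fst (ends G d) = v then \<beta> d else 0) - (if snd (ends G d) = v then \<beta> d else 0)
    | Pt d a \<Rightarrow> 0)"
  unfolding has_outflux_def
proof (intro conjI ballI allI impI)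
  show "cpwl G f" unfolding cpwl_iff_piecewise_affine
    using piecewise_affine_affine[OF affine] by (metis finite.emptyI)
  fix x assume "x \<in> points G"
  then show "outflux G f x = (case x of
      Vtx v \<Rightarrow> \<Sum>d\<in>edges G. (if fst (ends G d) = v then \<beta> d else 0) - (if snd (ends G d) = v then \<beta> d else 0)
    | Pt d a \<Rightarrow> 0)"
  proof (cases rule: points_cases)
    case (Vtx v)
    have "vertex_slope G f v d =
        (if fst (ends G d) = v then \<beta> d else 0) - (if snd (ends G d) = v then \<beta> d else 0)"
      if "d \<in> edges G" for d
      using vertex_slope_affine[OF wf_graph_edgeD(1)[OF assms(1) that] affine[OF that]] .
    then show ?thesis
      unfolding Vtx(1) outflux_Vtx[OF wf_graph_finite(1)[OF assms(1)]] by simp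
  next
    case (Pt d a)
    then show ?thesis using outflux_Pt_affine[OF _ _ affine[of d], of a] by simp
  qed
qed (rule outside)

lemma has_outflux_const:
  assumes "wf_graph G"
  shows "has_outflux G (\<lambda>x. if x \<in> points G then k else 0) (\<lambda>_. 0)"
proof -
  have "\<forall>y\<in>{0..len G d}. edge_fun G (\<lambda>x. if x \<in> points G then k else 0) d y = k + 0 * y"
    if "d \<in> edges G" for d
    using wf_graph_edgeD[OF assms that] that unfolding edge_fun_def by auto
  from has_outflux_edgewise_affine[OF assms this] show ?thesis
    by (rule has_outflux_cong) (auto split: pt.split)
qed

lemma has_outflux_zero: "wf_graph G \<Longrightarrow> has_outflux G (\<lambda>_. 0) (\<lambda>_. 0)"
  using has_outflux_const[of G 0] by simp

lemma sum_vertices_outflux: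
  assumes "wf_graph G"
  shows "(\<Sum>v\<in>verts G. g (Vtx v) * outflux G f (Vtx v)) =
    (\<Sum>d\<in>edges G. g (Vtx (fst (ends G d))) * dslope_right (edge_fun G f d) 0 +
                   g (Vtx (snd (ends G d))) * dslope_left (edge_fun G f d) (len G d))"
proof -
  have "(\<Sum>v\<in>verts G. g (Vtx v) * outflux G f (Vtx v)) =
      (\<Sum>d\<in>edges G. \<Sum>v\<in>verts G. g (Vtx v) * vertex_slope G f v d)"
    unfolding outflux_Vtx[OF wf_graph_finite(1)[OF assms]] sum_distrib_left by (rule sum.swap)
  also have "\<dots> = (\<Sum>d\<in>edges G. g (Vtx (fst (ends G d))) * dslope_right (edge_fun G f d) 0 +
                   g (Vtx (snd (ends G d))) * dslope_left (edge_fun G f d) (len G d))"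
  proof (rule sum.cong[OF refl])
    fix d assume d: "d \<in> edges G"
    let ?p = "fst (ends G d)" and ?q = "snd (ends G d)"
    have "g (Vtx v) * vertex_slope G f v d =
        (if ?p = v then g (Vtx ?p) * dslope_right (edge_fun G f d) 0 else 0) +
        (if ?q = v then g (Vtx ?q) * dslope_left (edge_fun G f d) (len G d) else 0)" for v
      unfolding vertex_slope_def by (simp add: distrib_left)
    then show "(\<Sum>v\<in>verts G. g (Vtx v) * vertex_slope G f v d) =
        g (Vtx ?p) * dslope_right (edge_fun G f d) 0 + g (Vtx ?q) * dslope_left (edge_fun G f d) (len G d)"
      using wf_graph_edgeD[OF assms d] wf_graph_finite(2)[OF assms] by (simp add: sum.distrib)
  qed
  finally show ?thesis .
qed

lemma sum_points_split:
  assumes "finite V" "finite E" "\<forall>d\<in>E. finite (A d)"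
  shows "(\<Sum>x\<in>Vtx ` V \<union> (\<Union>d\<in>E. Pt d ` A d). h x) = (\<Sum>v\<in>V. h (Vtx v)) + (\<Sum>d\<in>E. \<Sum>a\<in>A d. h (Pt d a))"
proof -
  have "(\<Sum>x\<in>Vtx ` V \<union> (\<Union>d\<in>E. Pt d ` A d). h x) = sum h (Vtx ` V) + sum h (\<Union>d\<in>E. Pt d ` A d)"
    using assms by (intro sum.union_disjoint) auto
  also have "sum h (\<Union>d\<in>E. Pt d ` A d) = (\<Sum>d\<in>E. sum h (Pt d ` A d))"
    using assms by (intro sum.UNION_disjoint) auto
  finally show ?thesis by (simp add: sum.reindex inj_on_def)
qed

lemma sum_outflux_eq_green_forms:
  assumes "wf_graph G" "finite S" "S \<subseteq> points G" "\<forall>x\<in>points G - S. outflux G f x = 0"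
    and W: "\<forall>d\<in>edges G. finite (W d) \<and> {a. Pt d a \<in> S} \<subseteq> W d"
  shows "(\<Sum>x\<in>S. g x * outflux G f x) =
    (\<Sum>d\<in>edges G. green_form (W d) (edge_fun G f d) (edge_fun G g d) 0 (len G d))"
proof -
  define N where "N = Vtx ` verts G \<union> (\<Union>d\<in>edges G. Pt d ` (W d \<inter> {0<..<len G d}))"
  have fin: "finite (verts G)" "finite (edges G)" using wf_graph_finite[OF assms(1)] by auto
  have "S \<subseteq> N"
  proof
    fix x assume "x \<in> S"
    with assms(3) have "x \<in> points G" by auto
    then show "x \<in> N"
    proof (cases rule: points_cases)
      case (Pt d a)
      with W \<open>x \<in> S\<close> have "a \<in> W d \<inter> {0<..<len G d}" by auto
      with Pt show ?thesis unfolding N_def by blast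
    qed (simp add: N_def)
  qed
  moreover have "N \<subseteq> points G" unfolding N_def points_def by auto
  ultimately have "(\<Sum>x\<in>S. g x * outflux G f x) = (\<Sum>x\<in>N. g x * outflux G f x)"
    using assms(4) fin W unfolding N_def by (intro sum.mono_neutral_left) auto
  also have "\<dots> = (\<Sum>v\<in>verts G. g (Vtx v) * outflux G f (Vtx v)) +
      (\<Sum>d\<in>edges G. \<Sum>a\<in>W d \<inter> {0<..<len G d}. g (Pt d a) * outflux G f (Pt d a))"
    unfolding N_def using fin W by (intro sum_points_split) auto
  also have "\<dots> = (\<Sum>d\<in>edges G. green_form (W d) (edge_fun G f d) (edge_fun G g d) 0 (len G d))"
    unfolding sum_vertices_outflux[OF assms(1)] sum.distrib[symmetric]
  proof (rule sum.cong[OF refl])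
    fix d assume "d \<in> edges G"
    then have "(\<Sum>a\<in>W d \<inter> {0<..<len G d}. g (Pt d a) * outflux G f (Pt d a)) =
        (\<Sum>a\<in>W d \<inter> {0<..<len G d}. edge_fun G g d a * (dslope_right (edge_fun G f d) a + dslope_left (edge_fun G f d) a))"
      by (intro sum.cong) (auto simp: outflux_Pt)
    with wf_graph_edgeD(1)[OF assms(1) \<open>d \<in> edges G\<close>] show "g (Vtx (fst (ends G d))) * dslope_right (edge_fun G f d) 0 +
        g (Vtx (snd (ends G d))) * dslope_left (edge_fun G f d) (len G d) +
        (\<Sum>a\<in>W d \<inter> {0<..<len G d}. g (Pt d a) * outflux G f (Pt d a)) =
        green_form (W d) (edge_fun G f d) (edge_fun G g d) 0 (len G d)"
      unfolding green_form_def by simp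
  qed
  finally show ?thesis .
qed

lemma sum_outflux:
  assumes "has_outflux G f c" "S \<subseteq> points G"
  shows "(\<Sum>x\<in>S. g x * c x) = (\<Sum>x\<in>S. g x * outflux G f x)"
  using has_outfluxD(3)[OF assms(1)] assms(2) by (intro sum.cong) auto

lemma green_reciprocity:
  assumes "wf_graph G" "has_outflux G f c" "has_outflux G g c'" "finite S" "S \<subseteq> points G"
    and "\<forall>x\<in>points G - S. c x = 0" "\<forall>x\<in>points G - S. c' x = 0"
  shows "(\<Sum>x\<in>S. g x * c x) = (\<Sum>x\<in>S. f x * c' x)"
proof -
  obtain W where W: "\<forall>d\<in>edges G. finite (W d) \<and> {a. Pt d a \<in> S} \<subseteq> W d \<and>
      piecewise_affine (W d) (edge_fun G f d) 0 (len G d) \<and> piecewise_affine (W d) (edge_fun G g d) 0 (len G d)"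
    using cpwl_common_breakpoints[OF has_outfluxD(1)[OF assms(2)] has_outfluxD(1)[OF assms(3)] assms(4)] by metis
  have zero: "\<forall>x\<in>points G - S. outflux G f x = 0" "\<forall>x\<in>points G - S. outflux G g x = 0"
    using assms(6,7) has_outfluxD(3)[OF assms(2)] has_outfluxD(3)[OF assms(3)] by auto
  have "(\<Sum>x\<in>S. g x * c x) = (\<Sum>d\<in>edges G. green_form (W d) (edge_fun G f d) (edge_fun G g d) 0 (len G d))"
    unfolding sum_outflux[OF assms(2,5)] using W by (intro sum_outflux_eq_green_forms assms(1,4,5) zero(1)) auto
  also have "\<dots> = (\<Sum>d\<in>edges G. green_form (W d) (edge_fun G g d) (edge_fun G f d) 0 (len G d))"
    using W wf_graph_edgeD(1)[OF assms(1)] by (intro sum.cong refl green_form_sym) auto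
  also have "\<dots> = (\<Sum>x\<in>S. f x * c' x)"
    unfolding sum_outflux[OF assms(3,5)] using W by (intro sum_outflux_eq_green_forms[symmetric] assms(1,4,5) zero(2)) auto
  finally show ?thesis .
qed

lemma sum_dipole:
  assumes "finite S" "y \<in> S" "z \<in> S"
  shows "(\<Sum>x\<in>S. h x * dipole y z x) = h z - h y"
proof -
  have "(\<Sum>x\<in>S. h x * dipole y z x) = (\<Sum>x\<in>S. if x = z then h x else 0) - (\<Sum>x\<in>S. if x = y then h x else 0)"
    unfolding sum_subtractf[symmetric] by (intro sum.cong refl) (simp add: dipole_def)
  with assms show ?thesis by (simp add: sum.delta)
qed

lemma has_outflux_reciprocity:
  assumes "wf_graph G" "has_outflux G f (dipole s t)" "has_outflux G g (dipole a b)"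
    and "s \<in> points G" "t \<in> points G" "a \<in> points G" "b \<in> points G"
  shows "g t - g s = f b - f a"
proof -
  have "(\<Sum>x\<in>{s, t, a, b}. g x * dipole s t x) = (\<Sum>x\<in>{s, t, a, b}. f x * dipole a b x)"
    using assms by (intro green_reciprocity[OF assms(1-3)]) (auto simp: dipole_def)
  then show ?thesis by (simp only: sum_dipole finite.emptyI finite_insert insert_iff simp_thms)
qed

lemma has_outflux_energy:
  assumes "wf_graph G" "has_outflux G f c" "finite S" "S \<subseteq> points G" "\<forall>x\<in>points G - S. c x = 0"
  shows "(\<Sum>x\<in>S. f x * c x) \<le> 0"
    and "(\<Sum>x\<in>S. f x * c x) = 0 \<Longrightarrow> \<forall>d\<in>edges G. \<forall>y\<in>{0..len G d}. edge_fun G f d y = edge_fun G f d 0"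
proof -
  obtain W where W: "\<forall>d\<in>edges G. finite (W d) \<and> {a. Pt d a \<in> S} \<subseteq> W d \<and>
      piecewise_affine (W d) (edge_fun G f d) 0 (len G d)"
    using cpwl_common_breakpoints[OF has_outfluxD(1)[OF assms(2)] has_outfluxD(1)[OF assms(2)] assms(3)] by metis
  let ?e = "\<lambda>d. green_form (W d) (edge_fun G f d) (edge_fun G f d) 0 (len G d)"
  have e: "?e d \<le> 0 \<and> (?e d = 0 \<longrightarrow> (\<forall>y\<in>{0..len G d}. edge_fun G f d y = edge_fun G f d 0))"
    if "d \<in> edges G" for d
    using W that wf_graph_edgeD(1)[OF assms(1) that] by (intro green_form_self) auto
  have "\<forall>x\<in>points G - S. outflux G f x = 0"
    using assms(5) has_outfluxD(3)[OF assms(2)] by auto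
  then have sum_e: "(\<Sum>x\<in>S. f x * c x) = sum ?e (edges G)"
    unfolding sum_outflux[OF assms(2,4)] using W by (intro sum_outflux_eq_green_forms assms(1,3,4)) auto
  then show "(\<Sum>x\<in>S. f x * c x) \<le> 0" using e by (simp add: sum_nonpos)
  assume "(\<Sum>x\<in>S. f x * c x) = 0"
  then have "(\<Sum>d\<in>edges G. - ?e d) = 0" unfolding sum_e by (simp add: sum_negf)
  then have "\<forall>d\<in>edges G. ?e d = 0"
    using e sum_nonneg_eq_0_iff[OF wf_graph_finite(1)[OF assms(1)], of "\<lambda>d. - ?e d"] by auto
  with e show "\<forall>d\<in>edges G. \<forall>y\<in>{0..len G d}. edge_fun G f d y = edge_fun G f d 0" by blast
qed

lemma metrized_graphD: "metrized_graph G \<Longrightarrow> wf_graph G" "metrized_graph G \<Longrightarrow> connected_graph G"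
  unfolding metrized_graph_def by auto

lemma symp_vadj: "symp (vadj G)"
  unfolding vadj_def by (auto intro: sympI)

lemma rtranclp_vadj_sym: "(vadj G)\<^sup>*\<^sup>* u v \<Longrightarrow> (vadj G)\<^sup>*\<^sup>* v u"
  by (rule sympD[OF symp_rtranclp[OF symp_vadj]])

lemma rtranclp_vadj_eq:
  assumes "\<forall>d\<in>edges G. h (snd (ends G d)) = h (fst (ends G d))" "(vadj G)\<^sup>*\<^sup>* u v"
  shows "h u = h v"
  using assms(2)
proof (induction rule: rtranclp_induct)
  case (step v w)
  then show ?case using assms(1) unfolding vadj_def by force
qed simp

lemma edgewise_const_imp_const:
  assumes "metrized_graph G"
    and const: "\<forall>d\<in>edges G. \<forall>y\<in>{0..len G d}. edge_fun G f d y = edge_fun G f d 0"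
    and "x \<in> points G" "y \<in> points G"
  shows "f x = f y"
proof -
  note wf = metrized_graphD(1)[OF assms(1)]
  have ends_eq: "\<forall>d\<in>edges G. f (Vtx (snd (ends G d))) = f (Vtx (fst (ends G d)))"
  proof
    fix d assume d: "d \<in> edges G"
    have "len G d \<in> {0..len G d}" using wf_graph_edgeD(1)[OF wf d] by simp
    with const d have "edge_fun G f d (len G d) = edge_fun G f d 0" by blast
    then show "f (Vtx (snd (ends G d))) = f (Vtx (fst (ends G d)))"
      using wf_graph_edgeD(1)[OF wf d] by simp
  qed
  have vertex: "\<exists>v\<in>verts G. f x = f (Vtx v)" if "x \<in> points G" for x
    using that
  proof (cases rule: points_cases)
    case (Pt d a)
    then have "a \<in> {0..len G d}" by simp
    with const Pt(2) have "edge_fun G f d a = edge_fun G f d 0" by blast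
    with Pt show ?thesis using wf_graph_edgeD(2)[OF wf Pt(2)] by auto
  qed auto
  obtain u v where "u \<in> verts G" "v \<in> verts G" "f x = f (Vtx u)" "f y = f (Vtx v)"
    using vertex[OF assms(3)] vertex[OF assms(4)] by blast
  with rtranclp_vadj_eq[of G "\<lambda>v. f (Vtx v)", OF ends_eq] metrized_graphD(2)[OF assms(1)]
  show ?thesis unfolding connected_graph_def by simp
qed

lemma has_outflux_zero_imp_const:
  assumes "metrized_graph G" "has_outflux G h c" "\<forall>x\<in>points G. c x = 0" "x \<in> points G" "y \<in> points G"
  shows "h x = h y"
  using has_outflux_energy(2)[OF metrized_graphD(1)[OF assms(1)] assms(2) finite.emptyI] assms
  by (intro edgewise_const_imp_const) auto

lemma has_outflux_diff_const:
  assumes "metrized_graph G" "has_outflux G f c" "has_outflux G g c" "x \<in> points G" "y \<in> points G"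
  shows "f x - g x = f y - g y"
  by (rule has_outflux_zero_imp_const[OF assms(1) has_outflux_diff[OF metrized_graphD(1)[OF assms(1)] assms(2,3)]
        _ assms(4,5)]) simp

lemma has_outflux_unique:
  assumes "metrized_graph G" "has_outflux G f c" "has_outflux G g c" "z \<in> points G" "f z = g z"
  shows "f = g"
proof
  fix x
  show "f x = g x"
  proof (cases "x \<in> points G")
    case True
    then show ?thesis using has_outflux_diff_const[OF assms(1-3) True assms(4)] assms(5) by simp
  next
    case False
    then show ?thesis using has_outfluxD(2)[OF assms(2)] has_outfluxD(2)[OF assms(3)] by simp
  qed
qed

lemma dipole_potential_drop:
  assumes "metrized_graph G" "has_outflux G f (dipole y z)" "y \<in> points G" "z \<in> points G" "y \<noteq> z"
  shows "f z < f y"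
proof (rule ccontr)
  note wf = metrized_graphD(1)[OF assms(1)]
  have S: "finite {y, z}" "{y, z} \<subseteq> points G" "\<forall>x\<in>points G - {y, z}. dipole y z x = 0"
    using assms(3,4) by (auto simp: dipole_def)
  have sum: "(\<Sum>x\<in>{y, z}. f x * dipole y z x) = f z - f y" by (rule sum_dipole) auto
  assume "\<not> f z < f y"
  with has_outflux_energy(1)[OF wf assms(2) S] sum have "(\<Sum>x\<in>{y, z}. f x * dipole y z x) = 0" by linarith
  from has_outflux_energy(2)[OF wf assms(2) S this]
  have "f x = f y" if "x \<in> points G" for x
    using edgewise_const_imp_const[OF assms(1) _ that assms(3)] by blast
  then obtain k where "f = (\<lambda>x. if x \<in> points G then k else 0)"
    using has_outfluxD(2)[OF assms(2)] by fastforce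
  then have "outflux G f y = 0" using has_outfluxD(3)[OF has_outflux_const[OF wf] assms(3)] by simp
  moreover have "outflux G f y = -1" using has_outfluxD(3)[OF assms(2,3)] assms(5) by (simp add: dipole_def)
  ultimately show False by simp
qed

section \<open>Deleting an edge\<close>

lemma del_edge_simps [simp]:
  "verts (del_edge G e) = verts G" "edges (del_edge G e) = edges G - {e}"
  "ends (del_edge G e) = ends G" "len (del_edge G e) = len G"
  unfolding del_edge_def by simp_all

lemma wf_graph_del_edge: "wf_graph G \<Longrightarrow> wf_graph (del_edge G e)"
  unfolding wf_graph_def by auto

lemma metrized_graph_del_edge: "metrized_graph G \<Longrightarrow> \<not> is_bridge G e \<Longrightarrow> metrized_graph (del_edge G e)"
  unfolding metrized_graph_def is_bridge_def by (simp add: wf_graph_del_edge)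

lemma points_del_edge: "x \<in> points (del_edge G e) \<longleftrightarrow> x \<in> points G \<and> (\<forall>a. x \<noteq> Pt e a)"
  unfolding points_def by auto

lemma edge_fun_del_edge [simp]: "edge_fun (del_edge G e) f d = edge_fun G f d"
  unfolding edge_fun_def del_edge_simps ..

lemma vertex_slope_del_edge [simp]: "vertex_slope (del_edge G e) f v d = vertex_slope G f v d"
  unfolding vertex_slope_def by simp

lemma outflux_del_edge_Vtx:
  assumes "finite (edges G)" "e \<in> edges G"
  shows "outflux G f (Vtx v) = outflux (del_edge G e) f (Vtx v) + vertex_slope G f v e"
  using assms(1) by (simp add: outflux_Vtx sum.remove[OF assms])

lemma dipole_Pt_del_edge:
  "s \<in> points (del_edge G e) \<Longrightarrow> t \<in> points (del_edge G e) \<Longrightarrow> dipole s t (Pt e a) = 0"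
  unfolding dipole_def points_del_edge by auto

lemma cpwl_replace_edge:
  assumes "cpwl H g" "edges G - {e} \<subseteq> edges H"
    and "\<And>d. d \<in> edges G - {e} \<Longrightarrow> len H d = len G d \<and> edge_fun G f d = edge_fun H g d"
    and "\<forall>y\<in>{0..len G e}. edge_fun G f e y = \<alpha> + \<beta> * y"
  shows "cpwl G f"
  unfolding cpwl_iff_piecewise_affine
proof
  fix d assume d: "d \<in> edges G"
  show "\<exists>W. finite W \<and> piecewise_affine W (edge_fun G f d) 0 (len G d)"
  proof (cases "d = e")
    case True
    with piecewise_affine_affine[OF assms(4)] show ?thesis by blast
  next
    case False
    with d assms(2,3) have "d \<in> edges H" "len H d = len G d" "edge_fun G f d = edge_fun H g d" by auto
    moreover from assms(1) \<open>d \<in> edges H\<close> obtain W where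
      "finite W" "piecewise_affine W (edge_fun H g d) 0 (len H d)"
      unfolding cpwl_iff_piecewise_affine by blast
    ultimately show ?thesis by auto
  qed
qed

definition interpolate_edge :: "('v, 'e) mgraph \<Rightarrow> 'e \<Rightarrow> (('v, 'e) pt \<Rightarrow> real) \<Rightarrow> ('v, 'e) pt \<Rightarrow> real" where
  "interpolate_edge G e h x = (case x of
      Vtx v \<Rightarrow> h x
    | Pt d a \<Rightarrow> if d \<noteq> e then h x else if 0 < a \<and> a < len G e then
        h (Vtx (fst (ends G e))) + (h (Vtx (snd (ends G e))) - h (Vtx (fst (ends G e)))) / len G e * a
        else 0)"

lemma interpolate_edge_eq: "(\<And>a. x \<noteq> Pt e a) \<Longrightarrow> interpolate_edge G e h x = h x"
  unfolding interpolate_edge_def by (cases x) auto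

lemma edge_fun_interpolate_edge_other: "d \<noteq> e \<Longrightarrow> edge_fun G (interpolate_edge G e h) d = edge_fun G h d"
  unfolding edge_fun_def by (auto simp: interpolate_edge_eq)

lemma edge_fun_interpolate_edge:
  assumes "0 < len G e"
  shows "\<forall>y\<in>{0..len G e}. edge_fun G (interpolate_edge G e h) e y = h (Vtx (fst (ends G e))) +
    (h (Vtx (snd (ends G e))) - h (Vtx (fst (ends G e)))) / len G e * y"
  using assms unfolding edge_fun_def by (auto simp: interpolate_edge_eq interpolate_edge_def)

lemma has_outflux_interpolate_edge:
  assumes "wf_graph G" "e \<in> edges G" "has_outflux (del_edge G e) h c" "\<And>a. c (Pt e a) = 0"
  defines "p \<equiv> Vtx (fst (ends G e))" and "q \<equiv> Vtx (snd (ends G e))"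
  shows "has_outflux G (interpolate_edge G e h) (\<lambda>x. c x - (h q - h p) / len G e * dipole p q x)"
proof -
  let ?F = "interpolate_edge G e h" and ?\<sigma> = "(h q - h p) / len G e"
  have L: "0 < len G e" using wf_graph_edgeD(1)[OF assms(1,2)] .
  have affine: "\<forall>y\<in>{0..len G e}. edge_fun G ?F e y = h p + ?\<sigma> * y"
    using edge_fun_interpolate_edge[OF L] unfolding p_def q_def by simp
  have cpwl: "cpwl G ?F"
    by (rule cpwl_replace_edge[OF has_outfluxD(1)[OF assms(3)] _ _ affine]) (auto simp: edge_fun_interpolate_edge_other)
  have outside: "?F x = 0" if "x \<notin> points G" for x
  proof (cases "\<exists>a. x = Pt e a")
    case True
    with that assms(2) show ?thesis by (auto simp: interpolate_edge_def)
  next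
    case False
    with that show ?thesis
      using has_outfluxD(2)[OF assms(3)] by (auto simp: interpolate_edge_eq points_del_edge)
  qed
  have "outflux G ?F x = c x - ?\<sigma> * dipole p q x" if "x \<in> points G" for x
    using that
  proof (cases rule: points_cases)
    case (Vtx v)
    have fin: "finite (edges G)" using wf_graph_finite(1)[OF assms(1)] .
    have "outflux (del_edge G e) ?F (Vtx v) = outflux (del_edge G e) h (Vtx v)"
      using fin by (simp add: outflux_Vtx vertex_slope_cong[OF edge_fun_interpolate_edge_other])
    also have "\<dots> = c x" using has_outfluxD(3)[OF assms(3)] Vtx by simp
    finally show ?thesis
      unfolding Vtx(1) outflux_del_edge_Vtx[OF fin assms(2)] vertex_slope_affine[OF L affine]
      by (simp add: dipole_def p_def q_def)
  next
    case (Pt d a)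
    show ?thesis
    proof (cases "d = e")
      case True
      with Pt show ?thesis using outflux_Pt_affine[OF _ _ affine] assms(4) by (simp add: dipole_def p_def q_def)
    next
      case False
      with Pt have "x \<in> points (del_edge G e)" by simp
      with Pt False show ?thesis using has_outfluxD(3)[OF assms(3) \<open>x \<in> points (del_edge G e)\<close>]
        by (simp add: outflux_Pt edge_fun_interpolate_edge_other dipole_def p_def q_def)
    qed
  qed
  with cpwl outside show ?thesis unfolding has_outflux_def by blast
qed

section \<open>Bridges\<close>

lemma vadj_imp_vadj_del_edge:
  "vadj G u v \<Longrightarrow> vadj (del_edge G e) u v \<or> {u, v} = {fst (ends G e), snd (ends G e)}"
  unfolding vadj_def by (cases "ends G e") force

lemma bridge_ends_disconnected:
  assumes "metrized_graph G" "is_bridge G e"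
  shows "\<not> (vadj (del_edge G e))\<^sup>*\<^sup>* (fst (ends G e)) (snd (ends G e))"
proof
  let ?r = "(vadj (del_edge G e))\<^sup>*\<^sup>*"
  assume pq: "?r (fst (ends G e)) (snd (ends G e))"
  have step: "?r u v" if "vadj G u v" for u v
    using vadj_imp_vadj_del_edge[OF that, of e] pq rtranclp_vadj_sym[OF pq]
    by (auto simp: doubleton_eq_iff)
  have "?r u v" if "(vadj G)\<^sup>*\<^sup>* u v" for u v
    using that by (induction rule: rtranclp_induct) (auto intro: rtranclp_trans step)
  with metrized_graphD(2)[OF assms(1)] have "connected_graph (del_edge G e)"
    unfolding connected_graph_def by simp
  with assms(2) show False unfolding is_bridge_def by simp
qed

lemma reaches_edge_end:
  assumes "metrized_graph G" "e \<in> edges G" "v \<in> verts G"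
  shows "(vadj (del_edge G e))\<^sup>*\<^sup>* (fst (ends G e)) v \<or> (vadj (del_edge G e))\<^sup>*\<^sup>* (snd (ends G e)) v"
proof -
  have "(vadj G)\<^sup>*\<^sup>* (fst (ends G e)) v"
    using metrized_graphD[OF assms(1)] wf_graph_edgeD(2)[OF _ assms(2)] assms(3)
    unfolding connected_graph_def by blast
  then show ?thesis
  proof (induction rule: rtranclp_induct)
    case (step u w)
    from vadj_imp_vadj_del_edge[OF step(2), of e] show ?case
    proof
      assume "vadj (del_edge G e) u w"
      with step(3) show ?thesis by (meson rtranclp.rtrancl_into_rtrancl)
    next
      assume "{u, w} = {fst (ends G e), snd (ends G e)}"
      then have "w = fst (ends G e) \<or> w = snd (ends G e)" by auto
      then show ?thesis by auto
    qed
  qed simp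
qed

definition on_fst_side :: "('v, 'e) mgraph \<Rightarrow> 'e \<Rightarrow> 'v \<Rightarrow> bool" where
  "on_fst_side G e v \<longleftrightarrow> (vadj (del_edge G e))\<^sup>*\<^sup>* (fst (ends G e)) v"

lemma on_fst_side_cong:
  "(vadj (del_edge G e))\<^sup>*\<^sup>* u v \<Longrightarrow> on_fst_side G e u \<longleftrightarrow> on_fst_side G e v"
  unfolding on_fst_side_def by (meson rtranclp_trans rtranclp_vadj_sym)

lemma bridge_components:
  assumes "metrized_graph G" "e \<in> edges G" "is_bridge G e" "u \<in> verts G" "v \<in> verts G"
  shows "(vadj (del_edge G e))\<^sup>*\<^sup>* u v \<longleftrightarrow> (on_fst_side G e u \<longleftrightarrow> on_fst_side G e v)"
proof
  assume "on_fst_side G e u \<longleftrightarrow> on_fst_side G e v"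
  moreover have "on_fst_side G e w \<or> (vadj (del_edge G e))\<^sup>*\<^sup>* (snd (ends G e)) w" if "w \<in> verts G" for w
    using reaches_edge_end[OF assms(1,2) that] unfolding on_fst_side_def .
  ultimately show "(vadj (del_edge G e))\<^sup>*\<^sup>* u v"
    using assms(4,5) unfolding on_fst_side_def by (meson rtranclp_trans rtranclp_vadj_sym)
qed (rule on_fst_side_cong)

definition bridge_potential :: "('v, 'e) mgraph \<Rightarrow> 'e \<Rightarrow> ('v, 'e) pt \<Rightarrow> real" where
  "bridge_potential G e x = (case x of
      Vtx v \<Rightarrow> if v \<in> verts G \<and> \<not> on_fst_side G e v then len G e else 0
    | Pt d a \<Rightarrow> if d \<in> edges G \<and> 0 < a \<and> a < len G d then
        (if d = e then a else if on_fst_side G e (fst (ends G d)) then 0 else len G e) else 0)"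

lemma bridge_potential_del_edge:
  "x \<in> points (del_edge G e) \<Longrightarrow>
    bridge_potential G e x = (if on_fst_side G e (anchor (del_edge G e) x) then 0 else len G e)"
  by (erule points_cases) (auto simp: bridge_potential_def anchor_def)

lemma on_fst_side_ends:
  assumes "metrized_graph G" "is_bridge G e"
  shows "on_fst_side G e (fst (ends G e))" "\<not> on_fst_side G e (snd (ends G e))"
  using bridge_ends_disconnected[OF assms] unfolding on_fst_side_def by simp_all

lemma edge_fun_bridge_potential:
  assumes "metrized_graph G" "is_bridge G e" "d \<in> edges G"
  shows "\<forall>y\<in>{0..len G d}. edge_fun G (bridge_potential G e) d y =
    (if d = e \<or> on_fst_side G e (fst (ends G d)) then 0 else len G e) + (if d = e then 1 else 0) * y"
proof
  fix y assume y: "y \<in> {0..len G d}"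
  have "0 < len G d" "fst (ends G d) \<in> verts G" "snd (ends G d) \<in> verts G"
    using wf_graph_edgeD[OF metrized_graphD(1)[OF assms(1)] assms(3)] by auto
  moreover have "on_fst_side G e (snd (ends G d)) \<longleftrightarrow> on_fst_side G e (fst (ends G d))" if "d \<noteq> e"
  proof (rule on_fst_side_cong[symmetric, OF r_into_rtranclp])
    show "vadj (del_edge G e) (fst (ends G d)) (snd (ends G d))"
      using assms(3) that unfolding vadj_def by auto
  qed
  ultimately show "edge_fun G (bridge_potential G e) d y =
      (if d = e \<or> on_fst_side G e (fst (ends G d)) then 0 else len G e) + (if d = e then 1 else 0) * y"
    using y assms(3) on_fst_side_ends[OF assms(1,2)] unfolding edge_fun_def bridge_potential_def by auto
qed

lemma has_outflux_bridge_potential: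
  assumes "metrized_graph G" "e \<in> edges G" "is_bridge G e"
  defines "p \<equiv> Vtx (fst (ends G e))" and "q \<equiv> Vtx (snd (ends G e))"
  shows "has_outflux G (bridge_potential G e) (dipole q p)"
    and "bridge_potential G e p = 0" "bridge_potential G e q = len G e"
proof -
  note wf = metrized_graphD(1)[OF assms(1)] and sides = on_fst_side_ends[OF assms(1,3)]
  show "bridge_potential G e p = 0" "bridge_potential G e q = len G e"
    using sides wf_graph_edgeD[OF wf assms(2)] by (simp_all add: bridge_potential_def p_def q_def)
  let ?\<beta> = "\<lambda>d. if d = e then 1 else 0 :: real"
  from has_outflux_edgewise_affine[OF wf edge_fun_bridge_potential[OF assms(1,3)]]
  show "has_outflux G (bridge_potential G e) (dipole q p)"
  proof (rule has_outflux_cong)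
    show "x \<notin> points G \<Longrightarrow> bridge_potential G e x = 0" for x
      by (cases x) (auto simp: bridge_potential_def)
    fix x assume "x \<in> points G"
    show "(case x of Vtx v \<Rightarrow> \<Sum>d\<in>edges G. (if fst (ends G d) = v then ?\<beta> d else 0) - (if snd (ends G d) = v then ?\<beta> d else 0)
      | Pt d a \<Rightarrow> 0) = dipole q p x"
    proof (cases x)
      case (Vtx v)
      have "(\<Sum>d\<in>edges G. (if fst (ends G d) = v then ?\<beta> d else 0) - (if snd (ends G d) = v then ?\<beta> d else 0)) =
          (\<Sum>d\<in>edges G. if d = e then (if fst (ends G e) = v then 1 else 0) - (if snd (ends G e) = v then 1 else 0) else 0)"
        by (rule sum.cong) auto
      also have "\<dots> = dipole q p x"
        using Vtx wf_graph_finite(1)[OF wf] assms(2) sides by (auto simp: dipole_def p_def q_def)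
      finally show ?thesis using Vtx by simp
    qed (simp add: dipole_def p_def q_def)
  qed
qed

section \<open>Existence of voltages\<close>

definition tent :: "('v, 'e) mgraph \<Rightarrow> 'e \<Rightarrow> real \<Rightarrow> ('v, 'e) pt \<Rightarrow> real" where
  "tent G d a x = (case x of
      Vtx v \<Rightarrow> 0
    | Pt d' y \<Rightarrow> if d' = d \<and> 0 < y \<and> y < len G d then
        (if y \<le> a then y * (len G d - a) / len G d else a * (len G d - y) / len G d) else 0)"

lemma edge_fun_tent:
  assumes "0 < a" "a < len G d"
  shows "\<forall>y\<in>{0..a}. edge_fun G (tent G d a) d y = 0 + (len G d - a) / len G d * y"
    and "\<forall>y\<in>{a..len G d}. edge_fun G (tent G d a) d y = a + (- a / len G d) * y"
    and "d' \<noteq> d \<Longrightarrow> \<forall>y\<in>{0..len G d'}. edge_fun G (tent G d a) d' y = 0 + 0 * y"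
proof -
  have L: "0 < len G d" using assms by simp
  show "\<forall>y\<in>{0..a}. edge_fun G (tent G d a) d y = 0 + (len G d - a) / len G d * y"
    using assms unfolding edge_fun_def tent_def by auto
  have "a * (len G d - y) / len G d = a + (- a / len G d) * y" for y
    using L by (simp add: field_simps)
  moreover have "a * (len G d - a) / len G d = a + (- a / len G d) * a"
    using L by (simp add: field_simps)
  ultimately show "\<forall>y\<in>{a..len G d}. edge_fun G (tent G d a) d y = a + (- a / len G d) * y"
    using assms unfolding edge_fun_def tent_def by auto
  show "d' \<noteq> d \<Longrightarrow> \<forall>y\<in>{0..len G d'}. edge_fun G (tent G d a) d' y = 0 + 0 * y"
    unfolding edge_fun_def tent_def by simp
qed

lemma cpwl_tent:
  assumes "0 < a" "a < len G d"
  shows "cpwl G (tent G d a)"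
  unfolding cpwl_iff_piecewise_affine
proof
  fix d' assume "d' \<in> edges G"
  show "\<exists>W. finite W \<and> piecewise_affine W (edge_fun G (tent G d a) d') 0 (len G d')"
  proof (cases "d' = d")
    case True
    with piecewise_affine_two_pieces[OF edge_fun_tent(1,2)[OF assms]] show ?thesis by blast
  next
    case False
    with piecewise_affine_affine[OF edge_fun_tent(3)[OF assms]] show ?thesis by blast
  qed
qed

lemma has_outflux_tent:
  assumes "wf_graph G" "d \<in> edges G" "0 < a" "a < len G d"
  defines "x \<equiv> Pt d a" and "p \<equiv> Vtx (fst (ends G d))" and "q \<equiv> Vtx (snd (ends G d))" and "L \<equiv> len G d"
  shows "has_outflux G (tent G d a) (\<lambda>z. (L - a) / L * dipole x p z + a / L * dipole x q z)"
proof -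
  note left = edge_fun_tent(1)[OF assms(3,4)] and right = edge_fun_tent(2)[OF assms(3,4)]
    and other = edge_fun_tent(3)[OF assms(3,4)]
  have slopes: "dslope_right (edge_fun G (tent G d a) d) 0 = (L - a) / L"
    "dslope_left (edge_fun G (tent G d a) d) L = a / L"
    "dslope_right (edge_fun G (tent G d a) d) a = - a / L"
    "dslope_left (edge_fun G (tent G d a) d) a = - ((L - a) / L)"
    using dslope_right_affine[OF _ assms(3) left] dslope_left_affine[OF assms(4) _ right]
      dslope_right_affine[OF _ assms(4) right] dslope_left_affine[OF assms(3) _ left]
    unfolding L_def by simp_all
  have "outflux G (tent G d a) z = (L - a) / L * dipole x p z + a / L * dipole x q z" if "z \<in> points G" for z
    using that
  proof (cases rule: points_cases)
    case (Vtx v)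
    have "vertex_slope G (tent G d a) v d' = 0" if "d' \<in> edges G - {d}" for d'
      using vertex_slope_affine[OF wf_graph_edgeD(1)[OF assms(1)] other] that by simp
    then have "outflux G (tent G d a) z = vertex_slope G (tent G d a) v d"
      using Vtx wf_graph_finite(1)[OF assms(1)] assms(2) by (simp add: outflux_Vtx sum.remove)
    then show ?thesis using slopes unfolding Vtx vertex_slope_def by (simp add: dipole_def x_def p_def q_def L_def)
  next
    case (Pt d' y)
    consider "d' \<noteq> d" | "d' = d" "y \<noteq> a" | "d' = d" "y = a" by blast
    then show ?thesis
    proof cases
      case 1
      with Pt show ?thesis using outflux_Pt_affine[OF _ _ other] by (simp add: dipole_def x_def p_def q_def)
    next
      case 2
      with Pt have "outflux G (tent G d a) z = 0"
        using outflux_Pt_affine[OF _ _ left, of y] outflux_Pt_affine[OF _ _ right, of y] by fastforce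
      with Pt 2 show ?thesis by (simp add: dipole_def x_def p_def q_def)
    next
      case 3
      have "- a / L - (L - a) / L = -1" using assms(3,4) by (simp add: field_simps L_def)
      with Pt 3 slopes show ?thesis by (simp add: outflux_Pt dipole_def x_def p_def q_def L_def)
    qed
  qed
  moreover have "tent G d a z = 0" if "z \<notin> points G" for z
    using that assms(2) by (cases z) (auto simp: tent_def)
  ultimately show ?thesis using cpwl_tent[OF assms(3,4)] unfolding has_outflux_def by blast
qed

lemma has_outflux_dipole_trans:
  "wf_graph G \<Longrightarrow> has_outflux G f (dipole x y) \<Longrightarrow> has_outflux G g (dipole y z) \<Longrightarrow>
    has_outflux G (\<lambda>w. f w + g w) (dipole x z)"
  by (erule has_outflux_cong[OF has_outflux_add]) (auto simp: dipole_def)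

lemma has_outflux_dipole_swap:
  "wf_graph G \<Longrightarrow> has_outflux G f (dipole y z) \<Longrightarrow> has_outflux G (\<lambda>w. - f w) (dipole z y)"
proof -
  assume "wf_graph G" "has_outflux G f (dipole y z)"
  from has_outflux_scale[OF this, of "-1"] have "has_outflux G (\<lambda>w. - f w) (\<lambda>w. - dipole y z w)" by simp
  then show ?thesis by (rule has_outflux_cong) (simp add: dipole_def)
qed

lemma exists_dipole_path:
  assumes "wf_graph G"
    and edge: "\<And>d. d \<in> edges G \<Longrightarrow> \<exists>f. has_outflux G f (dipole (Vtx (fst (ends G d))) (Vtx (snd (ends G d))))"
    and "(vadj G)\<^sup>*\<^sup>* u v"
  shows "\<exists>f. has_outflux G f (dipole (Vtx u) (Vtx v))"
  using assms(3)
proof (induction rule: rtranclp_induct)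
  case base
  then show ?case using has_outflux_zero[OF assms(1)] by auto
next
  case (step v w)
  obtain d where d: "d \<in> edges G" "ends G d = (v, w) \<or> ends G d = (w, v)"
    using step(2) unfolding vadj_def by blast
  have "\<exists>f. has_outflux G f (dipole (Vtx v) (Vtx w))"
    using d(2)
  proof
    assume "ends G d = (w, v)"
    then show ?thesis using edge[OF d(1)] has_outflux_dipole_swap[OF assms(1)] by auto
  qed (use edge[OF d(1)] in auto)
  with step(3) show ?case using has_outflux_dipole_trans[OF assms(1)] by blast
qed

lemma has_outflux_dipole_interior:
  assumes "wf_graph G" "d \<in> edges G" "0 < a" "a < len G d"
  defines "p \<equiv> Vtx (fst (ends G d))" and "q \<equiv> Vtx (snd (ends G d))"
  assumes g: "has_outflux G g (dipole q p)"
  shows "has_outflux G (\<lambda>w. tent G d a w + a / len G d * g w) (dipole (Pt d a) p)"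
proof -
  let ?x = "Pt d a" and ?c1 = "(len G d - a) / len G d" and ?c2 = "a / len G d"
  have "?c1 * dipole ?x p w + ?c2 * dipole ?x q w + ?c2 * dipole q p w = dipole ?x p w" for w
  proof -
    have "?c1 * dipole ?x p w + ?c2 * dipole ?x q w + ?c2 * dipole q p w =
        ?c1 * dipole ?x p w + ?c2 * (dipole ?x q w + dipole q p w)"
      by (simp only: add.assoc distrib_left)
    also have "\<dots> = (?c1 + ?c2) * dipole ?x p w" by (simp only: dipole_add distrib_right)
    also have "?c1 + ?c2 = 1" using assms(3,4) by (simp add: field_simps)
    finally show ?thesis by simp
  qed
  with has_outflux_add[OF assms(1) has_outflux_tent[OF assms(1-4)] has_outflux_scale[OF assms(1) g, of ?c2]]
  show ?thesis unfolding p_def q_def by (simp add: has_outflux_cong)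
qed

lemma exists_dipole_from_edges:
  assumes "metrized_graph G"
    and edge: "\<And>d. d \<in> edges G \<Longrightarrow> \<exists>f. has_outflux G f (dipole (Vtx (fst (ends G d))) (Vtx (snd (ends G d))))"
    and "y \<in> points G" "z \<in> points G"
  shows "\<exists>f. has_outflux G f (dipole y z)"
proof -
  note wf = metrized_graphD(1)[OF assms(1)]
  have path: "\<exists>f. has_outflux G f (dipole (Vtx u) (Vtx v))" if "u \<in> verts G" "v \<in> verts G" for u v
    using metrized_graphD(2)[OF assms(1)] that unfolding connected_graph_def
    by (blast intro: exists_dipole_path[OF wf edge])
  obtain v0 where v0: "v0 \<in> verts G" using wf unfolding wf_graph_def by blast
  have to_v0: "\<exists>f. has_outflux G f (dipole x (Vtx v0))" if "x \<in> points G" for x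
    using that
  proof (cases rule: points_cases)
    case (Vtx v)
    then show ?thesis using path v0 by blast
  next
    case (Pt d a)
    obtain g where "has_outflux G g (dipole (Vtx (fst (ends G d))) (Vtx (snd (ends G d))))"
      using edge[OF Pt(2)] by blast
    from has_outflux_dipole_interior[OF wf Pt(2-4) has_outflux_dipole_swap[OF wf this]]
    have "\<exists>f. has_outflux G f (dipole x (Vtx (fst (ends G d))))" unfolding Pt(1) by blast
    moreover have "\<exists>h. has_outflux G h (dipole (Vtx (fst (ends G d))) (Vtx v0))"
      using path[OF wf_graph_edgeD(2)[OF wf Pt(2)] v0] .
    ultimately show ?thesis using has_outflux_dipole_trans[OF wf] by blast
  qed
  obtain f g where "has_outflux G f (dipole y (Vtx v0))" "has_outflux G g (dipole z (Vtx v0))"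
    using to_v0 assms(3,4) by blast
  then show ?thesis using has_outflux_dipole_trans[OF wf _ has_outflux_dipole_swap[OF wf]] by blast
qed

lemma exists_dipole_edge:
  assumes "metrized_graph G" "d \<in> edges G"
  defines "p \<equiv> Vtx (fst (ends G d))" and "q \<equiv> Vtx (snd (ends G d))"
  assumes del: "\<not> is_bridge G d \<Longrightarrow> \<exists>h. has_outflux (del_edge G d) h (dipole p q)"
  shows "\<exists>f. has_outflux G f (dipole p q)"
proof -
  note wf = metrized_graphD(1)[OF assms(1)]
  consider "p = q" | "is_bridge G d" | "p \<noteq> q" "\<not> is_bridge G d" by blast
  then show ?thesis
  proof cases
    case 1
    then show ?thesis using has_outflux_zero[OF wf] by auto
  next
    case 2
    from has_outflux_dipole_swap[OF wf has_outflux_bridge_potential(1)[OF assms(1,2) 2]]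
    show ?thesis unfolding p_def q_def by blast
  next
    case 3
    note G' = metrized_graph_del_edge[OF assms(1) 3(2)]
    obtain h where h: "has_outflux (del_edge G d) h (dipole p q)" using del 3(2) by blast
    have pq: "p \<in> points (del_edge G d)" "q \<in> points (del_edge G d)"
      using wf_graph_edgeD[OF wf assms(2)] by (simp_all add: p_def q_def)
    define \<sigma> where "\<sigma> = (h q - h p) / len G d"
    have "\<sigma> < 0"
      using dipole_potential_drop[OF G' h pq 3(1)] wf_graph_edgeD(1)[OF wf assms(2)]
      by (simp add: \<sigma>_def divide_neg_pos)
    have "has_outflux G (interpolate_edge G d h) (\<lambda>x. dipole p q x - \<sigma> * dipole p q x)"
      using has_outflux_interpolate_edge[OF wf assms(2) h] dipole_Pt_del_edge[OF pq]
      unfolding \<sigma>_def p_def q_def by blast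
    moreover have "1 / (1 - \<sigma>) * (D - \<sigma> * D) = D" for D
      using \<open>\<sigma> < 0\<close> by (simp add: field_simps)
    ultimately have "has_outflux G (\<lambda>x. 1 / (1 - \<sigma>) * interpolate_edge G d h x) (dipole p q)"
      by (intro has_outflux_cong[OF has_outflux_scale[OF wf]]) simp_all
    then show ?thesis by blast
  qed
qed

theorem exists_dipole_potential:
  assumes "metrized_graph G" "y \<in> points G" "z \<in> points G"
  shows "\<exists>f. has_outflux G f (dipole y z)"
  using assms
proof (induction "card (edges G)" arbitrary: G y z rule: less_induct)
  case less
  have "\<exists>f. has_outflux G f (dipole (Vtx (fst (ends G d))) (Vtx (snd (ends G d))))"
    if d: "d \<in> edges G" for d
  proof (rule exists_dipole_edge[OF less.prems(1) d])
    assume "\<not> is_bridge G d"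
    moreover have "card (edges (del_edge G d)) < card (edges G)"
      using card_Diff1_less[OF wf_graph_finite(1)[OF metrized_graphD(1)[OF less.prems(1)]] d] by simp
    ultimately show "\<exists>h. has_outflux (del_edge G d) h (dipole (Vtx (fst (ends G d))) (Vtx (snd (ends G d))))"
      using less.hyps metrized_graph_del_edge[OF less.prems(1)]
        wf_graph_edgeD[OF metrized_graphD(1)[OF less.prems(1)] d] by simp
  qed
  then show ?case by (rule exists_dipole_from_edges[OF less.prems(1) _ less.prems(2,3)])
qed

lemma is_voltage_jv:
  assumes "metrized_graph G" "y \<in> points G" "z \<in> points G"
  shows "is_voltage G y z (\<lambda>x. jv G z x y)"
proof -
  note wf = metrized_graphD(1)[OF assms(1)]
  obtain f where f: "has_outflux G f (dipole y z)" using exists_dipole_potential[OF assms] by blast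
  define g where "g x = f x - (if x \<in> points G then f z else 0)" for x
  have "has_outflux G g (dipole y z)"
    unfolding g_def by (rule has_outflux_cong[OF has_outflux_diff[OF wf f has_outflux_const[OF wf]]]) simp
  with assms(3) have g: "is_voltage G y z g" unfolding is_voltage_iff g_def by simp
  have "(THE f. is_voltage G y z f) = g"
  proof (rule the_equality)
    show "is_voltage G y z g" by (rule g)
    fix h assume "is_voltage G y z h"
    with g show "h = g" unfolding is_voltage_iff using has_outflux_unique[OF assms(1) _ _ assms(3)] by metis
  qed
  with g show ?thesis unfolding jv_def by simp
qed

lemma has_outflux_jv:
  "metrized_graph G \<Longrightarrow> y \<in> points G \<Longrightarrow> z \<in> points G \<Longrightarrow> has_outflux G (\<lambda>x. jv G z x y) (dipole y z)"
  using is_voltage_jv unfolding is_voltage_iff by blast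

lemma jv_exit:
  "metrized_graph G \<Longrightarrow> y \<in> points G \<Longrightarrow> z \<in> points G \<Longrightarrow> jv G z z y = 0"
  using is_voltage_jv unfolding is_voltage_iff by blast

lemma jv_eq_potential:
  assumes "metrized_graph G" "has_outflux G f (dipole y z)" "x \<in> points G" "y \<in> points G" "z \<in> points G"
  shows "jv G z x y = f x - f z"
  using has_outflux_diff_const[OF assms(1,2) has_outflux_jv[OF assms(1,4,5)] assms(3,5)] jv_exit[OF assms(1,4,5)]
  by simp

lemma reff_eq_potential:
  assumes "metrized_graph G" "has_outflux G f (dipole s t)" "s \<in> points G" "t \<in> points G"
  shows "reff G s t = f s - f t"
  unfolding reff_def using jv_eq_potential[OF assms(1,2,3,3,4)] .

lemma reff_pos:
  assumes "metrized_graph G" "p \<in> points G" "q \<in> points G" "p \<noteq> q"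
  shows "0 < reff G p q"
  using dipole_potential_drop[OF assms(1) has_outflux_jv[OF assms(1-3)] assms(2-4)] jv_exit[OF assms(1-3)]
  unfolding reff_def by simp

lemma jv_diff_eq_potential:
  assumes "metrized_graph G" "has_outflux G f (dipole s t)"
    and "s \<in> points G" "t \<in> points G" "p \<in> points G" "q \<in> points G"
  shows "jv G p q s - jv G p q t = f q - f p"
proof -
  note wf = metrized_graphD(1)[OF assms(1)]
  have "has_outflux G (\<lambda>x. jv G p x s - jv G p x t) (dipole s t)"
    using has_outflux_diff[OF wf has_outflux_jv[OF assms(1,3,5)] has_outflux_jv[OF assms(1,4,5)]]
    by (rule has_outflux_cong) (simp add: dipole_def)
  from has_outflux_diff_const[OF assms(1) this assms(2) assms(6,5)]
  show ?thesis using jv_exit[OF assms(1,3,5)] jv_exit[OF assms(1,4,5)] by simp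
qed

section \<open>Contracting an edge\<close>

lemma contract_simps [simp]:
  "verts (contract G e) = cmap G e ` verts G" "edges (contract G e) = edges G - {e}"
  "ends (contract G e) d = map_prod (cmap G e) (cmap G e) (ends G d)" "len (contract G e) = len G"
  unfolding contract_def by simp_all

lemma cmap_fst [simp]: "cmap G e (fst (ends G e)) = fst (ends G e)"
  and cmap_snd [simp]: "cmap G e (snd (ends G e)) = fst (ends G e)"
  unfolding cmap_def by simp_all

lemma wf_graph_contract:
  assumes "wf_graph G" "e \<in> edges G"
  shows "wf_graph (contract G e)"
  using assms wf_graph_edgeD[OF assms(1)] unfolding wf_graph_def by (auto simp: fst_map_prod snd_map_prod)

lemma rtranclp_vadj_contract:
  assumes "(vadj G)\<^sup>*\<^sup>* u v"
  shows "(vadj (contract G e))\<^sup>*\<^sup>* (cmap G e u) (cmap G e v)"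
  using assms
proof (induction rule: rtranclp_induct)
  case (step v w)
  obtain d where d: "d \<in> edges G" "ends G d = (v, w) \<or> ends G d = (w, v)"
    using step(2) unfolding vadj_def by blast
  show ?case
  proof (cases "d = e")
    case True
    with d(2) have "{v, w} = {fst (ends G e), snd (ends G e)}" by auto
    then have "cmap G e v = cmap G e w" by (auto simp: doubleton_eq_iff)
    with step(3) show ?thesis by simp
  next
    case False
    with d have "vadj (contract G e) (cmap G e v) (cmap G e w)" unfolding vadj_def by force
    with step(3) show ?thesis by simp
  qed
qed simp

lemma metrized_graph_contract:
  assumes "metrized_graph G" "e \<in> edges G"
  shows "metrized_graph (contract G e)"
  using assms wf_graph_contract[OF metrized_graphD(1)[OF assms(1)] assms(2)]
    rtranclp_vadj_contract[of G _ _ e] metrized_graphD(2)[OF assms(1)]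
  unfolding metrized_graph_def connected_graph_def by auto

lemma cpt_in_points: "s \<in> points (del_edge G e) \<Longrightarrow> cpt G e s \<in> points (contract G e)"
  by (erule points_cases) (auto simp: cpt_def)

lemma cpt_eq_fst_iff:
  "s \<in> points (del_edge G e) \<Longrightarrow>
    cpt G e s = Vtx (fst (ends G e)) \<longleftrightarrow> s = Vtx (fst (ends G e)) \<or> s = Vtx (snd (ends G e))"
  by (erule points_cases) (auto simp: cpt_def cmap_def)

lemma cpt_eq_cpt_iff:
  "x \<noteq> Vtx (fst (ends G e)) \<Longrightarrow> x \<noteq> Vtx (snd (ends G e)) \<Longrightarrow> cpt G e x = cpt G e s \<longleftrightarrow> x = s"
  by (cases s; cases x) (auto simp: cpt_def cmap_def)

lemma dipole_cpt:
  "x \<noteq> Vtx (fst (ends G e)) \<Longrightarrow> x \<noteq> Vtx (snd (ends G e)) \<Longrightarrow>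
    dipole (cpt G e s) (cpt G e t) (cpt G e x) = dipole s t x"
  unfolding dipole_def by (simp add: cpt_eq_cpt_iff)

lemma dipole_cpt_fst:
  assumes "s \<in> points (del_edge G e)" "t \<in> points (del_edge G e)"
  defines "p \<equiv> Vtx (fst (ends G e))" and "q \<equiv> Vtx (snd (ends G e))"
  shows "p \<noteq> q \<Longrightarrow> dipole (cpt G e s) (cpt G e t) p = dipole s t p + dipole s t q"
    and "p = q \<Longrightarrow> dipole (cpt G e s) (cpt G e t) p = dipole s t p"
proof -
  have iff: "p = cpt G e s \<longleftrightarrow> s = p \<or> s = q" "p = cpt G e t \<longleftrightarrow> t = p \<or> t = q"
    using cpt_eq_fst_iff[OF assms(1)] cpt_eq_fst_iff[OF assms(2)] unfolding p_def q_def by auto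
  show "p \<noteq> q \<Longrightarrow> dipole (cpt G e s) (cpt G e t) p = dipole s t p + dipole s t q"
    unfolding dipole_def iff by auto
  show "p = q \<Longrightarrow> dipole (cpt G e s) (cpt G e t) p = dipole s t p"
    unfolding dipole_def iff by auto
qed

definition contract_lift :: "('v, 'e) mgraph \<Rightarrow> 'e \<Rightarrow> (('v, 'e) pt \<Rightarrow> real) \<Rightarrow> ('v, 'e) pt \<Rightarrow> real" where
  "contract_lift G e g x = (if x \<notin> points G then 0 else case x of
      Vtx v \<Rightarrow> g (Vtx (cmap G e v))
    | Pt d a \<Rightarrow> if d = e then g (Vtx (fst (ends G e))) else g x)"

lemma contract_lift_cpt: "s \<in> points (del_edge G e) \<Longrightarrow> contract_lift G e g s = g (cpt G e s)"
  by (erule points_cases) (auto simp: contract_lift_def cpt_def points_del_edge)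

lemma edge_fun_contract_lift:
  assumes "wf_graph G" "d \<in> edges G"
  shows "d \<noteq> e \<Longrightarrow> edge_fun G (contract_lift G e g) d = edge_fun (contract G e) g d"
    and "d = e \<Longrightarrow> edge_fun G (contract_lift G e g) d y = g (Vtx (fst (ends G e)))"
  using assms wf_graph_edgeD[OF assms]
  by (auto simp: edge_fun_def contract_lift_def cmap_def fun_eq_iff split: prod.split)

lemma outflux_contract_lift:
  fixes G :: "('v, 'e) mgraph" and g :: "('v, 'e) pt \<Rightarrow> real"
  assumes "wf_graph G" "e \<in> edges G"
  defines "F \<equiv> contract_lift G e g" and "p \<equiv> fst (ends G e)" and "q \<equiv> snd (ends G e)"
  shows "\<And>v. v \<noteq> p \<Longrightarrow> v \<noteq> q \<Longrightarrow> outflux G F (Vtx v) = outflux (contract G e) g (Vtx v)"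
    and "p \<noteq> q \<Longrightarrow> outflux G F (Vtx p) + outflux G F (Vtx q) = outflux (contract G e) g (Vtx p)"
    and "p = q \<Longrightarrow> outflux G F (Vtx p) = outflux (contract G e) g (Vtx p)"
    and "\<And>d a. d \<in> edges G \<Longrightarrow> d \<noteq> e \<Longrightarrow> outflux G F (Pt d a) = outflux (contract G e) g (Pt d a)"
    and "\<And>a. 0 < a \<Longrightarrow> a < len G e \<Longrightarrow> outflux G F (Pt e a) = 0"
proof -
  let ?Gc = "contract G e"
  have fin: "finite (edges G)" using wf_graph_finite(1)[OF assms(1)] .
  have L: "0 < len G e" using wf_graph_edgeD(1)[OF assms(1,2)] .
  have const: "\<forall>y\<in>{0..len G e}. edge_fun G F e y = g (Vtx p) + 0 * y"
    using edge_fun_contract_lift(2)[OF assms(1,2)] unfolding F_def p_def by simp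
  have other: "edge_fun G F d = edge_fun ?Gc g d" if "d \<in> edges G - {e}" for d
    using edge_fun_contract_lift(1)[OF assms(1)] that unfolding F_def by simp
  define A where "A d = dslope_right (edge_fun ?Gc g d) 0" for d
  define B where "B d = dslope_left (edge_fun ?Gc g d) (len G d)" for d
  define S where "S P = (\<Sum>d\<in>edges G - {e}.
      (if P (fst (ends G d)) then A d else 0) + (if P (snd (ends G d)) then B d else 0))" for P
  have F_Vtx: "outflux G F (Vtx v) = S (\<lambda>u. u = v)" for v
  proof -
    have "vertex_slope G F v e = 0" using vertex_slope_affine[OF L const] by simp
    moreover have "vertex_slope G F v d = (if fst (ends G d) = v then A d else 0) + (if snd (ends G d) = v then B d else 0)"
      if "d \<in> edges G - {e}" for d
      unfolding vertex_slope_def A_def B_def other[OF that] by simp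
    ultimately show ?thesis
      using fin assms(2) by (simp add: outflux_Vtx sum.remove S_def)
  qed
  have C_Vtx: "outflux ?Gc g (Vtx w) = S (\<lambda>u. cmap G e u = w)" for w
    using fin by (simp add: outflux_Vtx S_def A_def B_def vertex_slope_def fst_map_prod snd_map_prod cong: if_cong)
  show "outflux G F (Vtx v) = outflux ?Gc g (Vtx v)" if "v \<noteq> p" "v \<noteq> q" for v
  proof -
    have "(\<lambda>u. cmap G e u = v) = (\<lambda>u. u = v)" using that unfolding cmap_def p_def q_def by auto
    then show ?thesis unfolding F_Vtx C_Vtx by simp
  qed
  show "outflux G F (Vtx p) + outflux G F (Vtx q) = outflux ?Gc g (Vtx p)" if "p \<noteq> q"
  proof -
    have "(if cmap G e u = p then X else 0) = (if u = p then X else 0) + (if u = q then X else 0)"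
      for u and X :: real
      using that unfolding cmap_def p_def q_def by auto
    then show ?thesis unfolding F_Vtx C_Vtx S_def sum.distrib[symmetric] by (intro sum.cong) auto
  qed
  show "outflux G F (Vtx p) = outflux ?Gc g (Vtx p)" if "p = q"
  proof -
    have "(\<lambda>u. cmap G e u = p) = (\<lambda>u. u = p)" using that unfolding cmap_def p_def q_def by auto
    then show ?thesis unfolding F_Vtx C_Vtx by simp
  qed
  show "outflux G F (Pt d a) = outflux ?Gc g (Pt d a)" if "d \<in> edges G" "d \<noteq> e" for d a
    using other that by (simp add: outflux_Pt)
  show "outflux G F (Pt e a) = 0" if "0 < a" "a < len G e" for a
    using outflux_Pt_affine[OF that const] .
qed

lemma has_outflux_contract_lift:
  assumes "wf_graph G" "e \<in> edges G" "s \<in> points (del_edge G e)" "t \<in> points (del_edge G e)"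
    and g: "has_outflux (contract G e) g (dipole (cpt G e s) (cpt G e t))"
  defines "p \<equiv> Vtx (fst (ends G e))" and "q \<equiv> Vtx (snd (ends G e))"
  obtains a where "has_outflux G (contract_lift G e g) (\<lambda>x. dipole s t x + a * dipole p q x)"
proof
  let ?F = "contract_lift G e g" and ?Gc = "contract G e"
  define a where "a = outflux G ?F q - dipole s t q"
  note lift = outflux_contract_lift[OF assms(1,2), where g = g]
  have g_flux: "outflux ?Gc g y = dipole (cpt G e s) (cpt G e t) y" if "y \<in> points ?Gc" for y
    using has_outfluxD(3)[OF g that] .
  have const: "\<forall>y\<in>{0..len G e}. edge_fun G ?F e y = g p + 0 * y"
    using edge_fun_contract_lift(2)[OF assms(1,2)] unfolding p_def by simp
  have "cpwl G ?F"
    by (rule cpwl_replace_edge[OF has_outfluxD(1)[OF g] _ _ const]) (auto simp: edge_fun_contract_lift(1)[OF assms(1)])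
  moreover have "\<forall>x. x \<notin> points G \<longrightarrow> ?F x = 0" unfolding contract_lift_def by simp
  moreover have "outflux G ?F x = dipole s t x + a * dipole p q x" if "x \<in> points G" for x
  proof -
    have p_points: "p \<in> points ?Gc" using wf_graph_edgeD(2)[OF assms(1,2)] unfolding p_def by force
    consider "x = p" "p \<noteq> q" | "x = p" "p = q" | "x = q" "p \<noteq> q" | "x \<noteq> p" "x \<noteq> q" by blast
    then show ?thesis
    proof cases
      case 1
      then have "outflux G ?F p = dipole s t p + dipole s t q - outflux G ?F q"
        using lift(2) g_flux[OF p_points] dipole_cpt_fst(1)[OF assms(3,4)] unfolding p_def q_def by force
      with 1 show ?thesis unfolding a_def by (simp add: dipole_def)
    next
      case 2
      then show ?thesis
        using lift(3) g_flux[OF p_points] dipole_cpt_fst(2)[OF assms(3,4)] unfolding p_def q_def by simp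
    next
      case 3
      then show ?thesis unfolding a_def by (simp add: dipole_def)
    next
      case 4
      from \<open>x \<in> points G\<close> show ?thesis
      proof (cases rule: points_cases)
        case (Vtx v)
        with 4 have "v \<noteq> fst (ends G e)" "v \<noteq> snd (ends G e)" unfolding p_def q_def by auto
        with Vtx 4 show ?thesis
          using lift(1) g_flux[of x] dipole_cpt[of x G e s t] by (simp add: cpt_def cmap_def p_def q_def dipole_def)
      next
        case (Pt d b)
        show ?thesis
        proof (cases "d = e")
          case True
          with Pt show ?thesis using lift(5) dipole_Pt_del_edge[OF assms(3,4)] by (simp add: dipole_def p_def q_def)
        next
          case False
          with Pt 4 show ?thesis
            using lift(4) g_flux[of x] dipole_cpt[of x G e s t] by (simp add: cpt_def p_def q_def dipole_def)
        qed
      qed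
    qed
  qed
  ultimately show "has_outflux G ?F (\<lambda>x. dipole s t x + a * dipole p q x)"
    unfolding has_outflux_def by blast
qed

section \<open>Contraction and effective resistance\<close>

text \<open>Here \<open>\<rho> = r(p, q)\<close>. The lift of the voltage of \<open>G / e\<close> and \<open>f - a u\<close>, for the voltage \<open>f\<close>
  of \<open>G\<close> and a suitable \<open>a\<close>, have the same outflux, so they differ by a constant: comparing them at
  \<open>p, q\<close> determines \<open>a\<close>, and at \<open>s, t\<close> gives the formula.\<close>

lemma reff_contract_eq:
  assumes "metrized_graph G" "e \<in> edges G" "fst (ends G e) \<noteq> snd (ends G e)"
    and st: "s \<in> points (del_edge G e)" "t \<in> points (del_edge G e)"
  defines "p \<equiv> Vtx (fst (ends G e))" and "q \<equiv> Vtx (snd (ends G e))"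
  assumes u: "has_outflux G u (dipole q p)" "u p = 0" "u q = \<rho>" "0 < \<rho>"
  shows "reff G s t = reff (contract G e) (cpt G e s) (cpt G e t) + (jv G p q s - jv G p q t)\<^sup>2 / \<rho>"
    and "u s - u t = jv G p q s - jv G p q t"
proof -
  note wf = metrized_graphD(1)[OF assms(1)]
  let ?Gc = "contract G e" and ?cs = "cpt G e s" and ?ct = "cpt G e t"
  let ?\<Delta> = "jv G p q s - jv G p q t"
  have pq: "p \<in> points G" "q \<in> points G" using wf_graph_edgeD[OF wf assms(2)] by (simp_all add: p_def q_def)
  have st_G: "s \<in> points G" "t \<in> points G" using st by (simp_all add: points_del_edge)
  define f where "f x = jv G t x s" for x
  have f: "has_outflux G f (dipole s t)" "f t = 0"
    unfolding f_def using has_outflux_jv[OF assms(1) st_G] jv_exit[OF assms(1) st_G] by simp_all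
  have \<Delta>: "?\<Delta> = f q - f p" by (rule jv_diff_eq_potential[OF assms(1) f(1) st_G pq])
  define g where "g y = jv ?Gc ?ct y ?cs" for y
  have Gc: "metrized_graph ?Gc" by (rule metrized_graph_contract[OF assms(1,2)])
  have g: "has_outflux ?Gc g (dipole ?cs ?ct)" "g ?ct = 0"
    unfolding g_def using has_outflux_jv[OF Gc cpt_in_points[OF st(1)] cpt_in_points[OF st(2)]]
      jv_exit[OF Gc cpt_in_points[OF st(1)] cpt_in_points[OF st(2)]] by simp_all
  obtain a where F: "has_outflux G (contract_lift G e g) (\<lambda>x. dipole s t x + a * dipole p q x)"
    using has_outflux_contract_lift[OF wf assms(2) st g(1)] unfolding p_def q_def by blast
  have "has_outflux G (\<lambda>x. f x - a * u x) (\<lambda>x. dipole s t x - a * dipole q p x)"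
    using has_outflux_lincomb[OF wf f(1) u(1), of 1 "- a"] by simp
  then have "has_outflux G (\<lambda>x. f x - a * u x) (\<lambda>x. dipole s t x + a * dipole p q x)"
    by (rule has_outflux_cong) (simp add: dipole_def)
  note same = has_outflux_diff_const[OF assms(1) F this]
  have lift_pq: "contract_lift G e g p = g p" "contract_lift G e g q = g p"
    using pq unfolding contract_lift_def p_def q_def by simp_all
  have "a * \<rho> = ?\<Delta>" using same[OF pq] lift_pq u(2,3) \<Delta> by simp
  moreover show us: "u s - u t = ?\<Delta>"
    using has_outflux_reciprocity[OF wf f(1) u(1) st_G pq(2,1)] \<Delta> by simp
  moreover have "contract_lift G e g s - contract_lift G e g t = (f s - f t) - a * (u s - u t)"
    using same[OF st_G] by (simp add: algebra_simps)
  ultimately have "g ?cs = f s - a * ?\<Delta>"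
    using contract_lift_cpt[OF st(1)] contract_lift_cpt[OF st(2)] g(2) f(2) by simp
  moreover have "a = ?\<Delta> / \<rho>" using \<open>a * \<rho> = ?\<Delta>\<close> u(4) by (simp add: eq_divide_eq)
  ultimately have "g ?cs = f s - ?\<Delta>\<^sup>2 / \<rho>" by (simp add: power2_eq_square)
  moreover have "reff G s t = f s" using reff_eq_potential[OF assms(1) f(1) st_G] f(2) by simp
  moreover have "reff ?Gc ?cs ?ct = g ?cs"
    using reff_eq_potential[OF Gc g(1) cpt_in_points[OF st(1)] cpt_in_points[OF st(2)]] g(2) by simp
  ultimately show "reff G s t = reff ?Gc ?cs ?ct + ?\<Delta>\<^sup>2 / \<rho>" by simp
qed

lemma reff_contract_loop:
  assumes "metrized_graph G" "e \<in> edges G" "fst (ends G e) = snd (ends G e)"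
    and st: "s \<in> points (del_edge G e)" "t \<in> points (del_edge G e)"
  shows "reff G s t = reff (contract G e) (cpt G e s) (cpt G e t)"
proof -
  let ?Gc = "contract G e" and ?cs = "cpt G e s" and ?ct = "cpt G e t"
  have Gc: "metrized_graph ?Gc" by (rule metrized_graph_contract[OF assms(1,2)])
  have cst: "?cs \<in> points ?Gc" "?ct \<in> points ?Gc" using cpt_in_points[OF st(1)] cpt_in_points[OF st(2)] .
  define g where "g y = jv ?Gc ?ct y ?cs" for y
  have g: "has_outflux ?Gc g (dipole ?cs ?ct)" "g ?ct = 0"
    unfolding g_def using has_outflux_jv[OF Gc cst] jv_exit[OF Gc cst] by simp_all
  obtain a where "has_outflux G (contract_lift G e g) (\<lambda>x. dipole s t x + a * dipole (Vtx (fst (ends G e))) (Vtx (snd (ends G e))) x)"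
    using has_outflux_contract_lift[OF metrized_graphD(1)[OF assms(1)] assms(2) st g(1)] by blast
  then have "has_outflux G (contract_lift G e g) (dipole s t)" using assms(3) by simp
  from reff_eq_potential[OF assms(1) this] st
  have "reff G s t = g ?cs - g ?ct" by (simp add: points_del_edge contract_lift_cpt)
  also have "\<dots> = reff ?Gc ?cs ?ct" using reff_eq_potential[OF Gc g(1) cst] g(2) by simp
  finally show ?thesis .
qed

lemma nonbridge_potential:
  assumes "metrized_graph G" "e \<in> edges G" "\<not> is_bridge G e" "fst (ends G e) \<noteq> snd (ends G e)"
  defines "p \<equiv> Vtx (fst (ends G e))" and "q \<equiv> Vtx (snd (ends G e))" and "L \<equiv> len G e"
    and "R \<equiv> reff (del_edge G e) (Vtx (fst (ends G e))) (Vtx (snd (ends G e)))"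
  obtains u where "has_outflux G u (dipole q p)" "u p = 0" "u q = L * R / (L + R)"
    "\<And>x. x \<in> points (del_edge G e) \<Longrightarrow> u x = L / (L + R) * (R - jv (del_edge G e) q x p)"
proof
  let ?G' = "del_edge G e"
  note wf = metrized_graphD(1)[OF assms(1)]
  have G': "metrized_graph ?G'" by (rule metrized_graph_del_edge[OF assms(1,3)])
  have pq: "p \<in> points ?G'" "q \<in> points ?G'" using wf_graph_edgeD[OF wf assms(2)] by (simp_all add: p_def q_def)
  define h where "h x = jv ?G' q x p" for x
  have h: "has_outflux ?G' h (dipole p q)" "h q = 0" "h p = R"
    unfolding h_def R_def reff_def p_def q_def using has_outflux_jv[OF G' pq] jv_exit[OF G' pq]
    by (simp_all add: p_def q_def)
  have "0 < L" "0 < R"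
    using wf_graph_edgeD(1)[OF wf assms(2)] reff_pos[OF G' pq] assms(4) by (simp_all add: L_def R_def p_def q_def)
  define \<kappa> where "\<kappa> = L / (L + R)"
  have "1 + R / L = (L + R) / L" using \<open>0 < L\<close> by (simp add: field_simps)
  then have \<kappa>: "\<kappa> * (1 + R / L) = 1" unfolding \<kappa>_def using \<open>0 < L\<close> \<open>0 < R\<close> by simp
  define u where "u x = \<kappa> * ((if x \<in> points G then R else 0) - interpolate_edge G e h x)" for x
  have "has_outflux G (interpolate_edge G e h) (\<lambda>x. dipole p q x - (h q - h p) / L * dipole p q x)"
    using has_outflux_interpolate_edge[OF wf assms(2) h(1)] dipole_Pt_del_edge[OF pq]
    unfolding p_def q_def L_def by blast
  from has_outflux_scale[OF wf has_outflux_diff[OF wf has_outflux_const[OF wf] this], of \<kappa>]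
  show "has_outflux G u (dipole q p)"
    unfolding u_def
  proof (rule has_outflux_cong)
    fix x
    have "\<kappa> * (0 - (dipole p q x - (h q - h p) / L * dipole p q x)) = - (\<kappa> * (1 + R / L)) * dipole p q x"
      using h(2,3) by (simp add: algebra_simps)
    then show "\<kappa> * (0 - (dipole p q x - (h q - h p) / L * dipole p q x)) = dipole q p x"
      unfolding \<kappa> by (simp add: dipole_def)
  qed
  have "u x = \<kappa> * (R - h x)" if "x \<in> points ?G'" for x
    using that unfolding u_def by (simp add: points_del_edge interpolate_edge_eq)
  then show "u p = 0" "u q = L * R / (L + R)"
    "\<And>x. x \<in> points ?G' \<Longrightarrow> u x = L / (L + R) * (R - jv ?G' q x p)"
    using pq h(2,3) by (simp_all add: \<kappa>_def h_def)
qed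

lemma reff_contract_parallel:
  assumes "metrized_graph G" "e \<in> edges G" "\<not> is_bridge G e" "fst (ends G e) \<noteq> snd (ends G e)"
    and st: "s \<in> points (del_edge G e)" "t \<in> points (del_edge G e)"
  defines "p \<equiv> Vtx (fst (ends G e))" and "q \<equiv> Vtx (snd (ends G e))" and "L \<equiv> len G e"
    and "R \<equiv> reff (del_edge G e) (Vtx (fst (ends G e))) (Vtx (snd (ends G e)))"
    and "rc \<equiv> reff (contract G e) (cpt G e s) (cpt G e t)"
  shows "reff G s t = rc + (L + R) / (L * R) * (jv G p q s - jv G p q t)\<^sup>2"
    and "reff G s t = rc + L / (R * (L + R)) * (jv (del_edge G e) p q s - jv (del_edge G e) p q t)\<^sup>2"
proof -
  let ?G' = "del_edge G e"
  let ?\<Delta> = "jv G p q s - jv G p q t" and ?\<Delta>' = "jv ?G' p q s - jv ?G' p q t"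
  note wf = metrized_graphD(1)[OF assms(1)]
  have G': "metrized_graph ?G'" by (rule metrized_graph_del_edge[OF assms(1,3)])
  have pq: "p \<in> points ?G'" "q \<in> points ?G'" using wf_graph_edgeD[OF wf assms(2)] by (simp_all add: p_def q_def)
  have "0 < L" "0 < R"
    using wf_graph_edgeD(1)[OF wf assms(2)] reff_pos[OF G' pq] assms(4) by (simp_all add: L_def R_def p_def q_def)
  obtain u where u: "has_outflux G u (dipole q p)" "u p = 0" "u q = L * R / (L + R)"
    "\<And>x. x \<in> points ?G' \<Longrightarrow> u x = L / (L + R) * (R - jv ?G' q x p)"
    using nonbridge_potential[OF assms(1-4)] unfolding p_def q_def L_def R_def by blast
  have \<rho>: "0 < L * R / (L + R)" using \<open>0 < L\<close> \<open>0 < R\<close> by simp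
  note eq = reff_contract_eq[OF assms(1,2,4) st u(1-3)[unfolded p_def q_def] \<rho>, folded p_def q_def rc_def]
  show first: "reff G s t = rc + (L + R) / (L * R) * ?\<Delta>\<^sup>2"
    using eq(1) by simp
  have "?\<Delta> = u s - u t" using eq(2) by simp
  also have "\<dots> = L / (L + R) * (jv ?G' q t p - jv ?G' q s p)"
    using u(4)[OF st(1)] u(4)[OF st(2)] by (simp add: algebra_simps)
  also have "jv ?G' q t p - jv ?G' q s p = ?\<Delta>'"
    using has_outflux_reciprocity[OF metrized_graphD(1)[OF G'] has_outflux_jv[OF G' st] has_outflux_jv[OF G' pq] st pq]
      jv_diff_eq_potential[OF G' has_outflux_jv[OF G' st] st pq] by simp
  finally have "?\<Delta> = L / (L + R) * ?\<Delta>'" .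
  moreover have "(L + R) / (L * R) * (L / (L + R) * x)\<^sup>2 = L / (R * (L + R)) * x\<^sup>2" for x
  proof -
    have "L \<noteq> 0" "R \<noteq> 0" "L + R \<noteq> 0" using \<open>0 < L\<close> \<open>0 < R\<close> by simp_all
    then have coeff: "(L + R) / (L * R) * (L / (L + R))\<^sup>2 = L / (R * (L + R))"
      by (simp add: power2_eq_square)
    have "(L + R) / (L * R) * (L / (L + R) * x)\<^sup>2 = ((L + R) / (L * R) * (L / (L + R))\<^sup>2) * x\<^sup>2"
      by (simp only: power_mult_distrib mult.assoc)
    then show ?thesis unfolding coeff .
  qed
  ultimately show "reff G s t = rc + L / (R * (L + R)) * ?\<Delta>'\<^sup>2"
    using first by simp
qed

lemma reff_contract_nonbridge:
  assumes "metrized_graph G" "e \<in> edges G" "\<not> is_bridge G e"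
    and st: "s \<in> points (del_edge G e)" "t \<in> points (del_edge G e)"
  defines "p \<equiv> Vtx (fst (ends G e))" and "q \<equiv> Vtx (snd (ends G e))" and "L \<equiv> len G e"
    and "R \<equiv> reff (del_edge G e) (Vtx (fst (ends G e))) (Vtx (snd (ends G e)))"
    and "rc \<equiv> reff (contract G e) (cpt G e s) (cpt G e t)"
  shows "reff G s t = rc + (L + R) / (L * R) * (jv G p q s - jv G p q t)\<^sup>2"
    and "reff G s t = rc + L / (R * (L + R)) * (jv (del_edge G e) p q s - jv (del_edge G e) p q t)\<^sup>2"
    and "rc \<le> reff G s t"
    and "reff G s t = rc \<longleftrightarrow> jv G p q s = jv G p q t"
proof -
  let ?G' = "del_edge G e"
  note wf = metrized_graphD(1)[OF assms(1)]
  have G': "metrized_graph ?G'" by (rule metrized_graph_del_edge[OF assms(1,3)])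
  have pq: "p \<in> points ?G'" "q \<in> points ?G'" using wf_graph_edgeD[OF wf assms(2)] by (simp_all add: p_def q_def)
  have st_G: "s \<in> points G" "t \<in> points G" using st by (simp_all add: points_del_edge)
  have "reff G s t = rc + (L + R) / (L * R) * (jv G p q s - jv G p q t)\<^sup>2 \<and>
      reff G s t = rc + L / (R * (L + R)) * (jv ?G' p q s - jv ?G' p q t)\<^sup>2 \<and>
      rc \<le> reff G s t \<and> (reff G s t = rc \<longleftrightarrow> jv G p q s = jv G p q t)"
  proof (cases "fst (ends G e) = snd (ends G e)")
    case True
    \<comment> \<open>A self-loop has \<open>R = 0\<close>, so both coefficients are \<open>x / 0 = 0\<close>; the formulas
      hold because \<open>p = q\<close> makes both voltage differences vanish.\<close>
    then have "p = q" unfolding p_def q_def by simp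
    moreover have "jv G p p x = 0" if "x \<in> points G" for x
      using jv_exit[OF assms(1) that] pq(1) by (simp add: points_del_edge)
    moreover have "jv ?G' p p x = 0" if "x \<in> points ?G'" for x
      using jv_exit[OF G' that pq(1)] .
    ultimately show ?thesis
      using reff_contract_loop[OF assms(1,2) True st] st st_G unfolding rc_def by simp
  next
    case False
    have "0 < L" "0 < R"
      using wf_graph_edgeD(1)[OF wf assms(2)] reff_pos[OF G' pq] False by (simp_all add: L_def R_def p_def q_def)
    then have k: "0 < (L + R) / (L * R)" by simp
    let ?d = "jv G p q s - jv G p q t"
    have "0 \<le> (L + R) / (L * R) * ?d\<^sup>2" using k by (intro mult_nonneg_nonneg) simp_all
    moreover have "(L + R) / (L * R) * ?d\<^sup>2 = 0 \<longleftrightarrow> jv G p q s = jv G p q t"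
      using \<open>0 < L\<close> \<open>0 < R\<close> by simp
    ultimately show ?thesis
      using reff_contract_parallel[OF assms(1-3) False st, folded p_def q_def L_def R_def rc_def] by linarith
  qed
  then show "reff G s t = rc + (L + R) / (L * R) * (jv G p q s - jv G p q t)\<^sup>2"
    and "reff G s t = rc + L / (R * (L + R)) * (jv ?G' p q s - jv ?G' p q t)\<^sup>2"
    and "rc \<le> reff G s t"
    and "reff G s t = rc \<longleftrightarrow> jv G p q s = jv G p q t" by blast+
qed

lemma anchor_in_verts: "wf_graph G \<Longrightarrow> x \<in> points G \<Longrightarrow> anchor G x \<in> verts G"
  by (erule points_cases) (auto simp: anchor_def dest: wf_graph_edgeD)

lemma reff_contract_bridge:
  assumes "metrized_graph G" "e \<in> edges G" "is_bridge G e"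
    and st: "s \<in> points (del_edge G e)" "t \<in> points (del_edge G e)"
  defines "rc \<equiv> reff (contract G e) (cpt G e s) (cpt G e t)"
  shows "same_comp (del_edge G e) s t \<Longrightarrow> reff G s t = rc"
    and "\<not> same_comp (del_edge G e) s t \<Longrightarrow> reff G s t = rc + len G e"
proof -
  let ?G' = "del_edge G e"
  let ?\<Delta> = "jv G (Vtx (fst (ends G e))) (Vtx (snd (ends G e))) s - jv G (Vtx (fst (ends G e))) (Vtx (snd (ends G e))) t"
  note wf = metrized_graphD(1)[OF assms(1)]
  note u = has_outflux_bridge_potential[OF assms(1-3)]
  have L: "0 < len G e" using wf_graph_edgeD(1)[OF wf assms(2)] .
  have "fst (ends G e) \<noteq> snd (ends G e)"
    using u(2,3) L by auto
  note eq = reff_contract_eq[OF assms(1,2) this st u L, folded rc_def]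
  have anchors: "anchor ?G' s \<in> verts G" "anchor ?G' t \<in> verts G"
    using anchor_in_verts[OF wf_graph_del_edge[OF wf]] st by auto
  have same: "same_comp ?G' s t \<longleftrightarrow> (on_fst_side G e (anchor ?G' s) \<longleftrightarrow> on_fst_side G e (anchor ?G' t))"
    unfolding same_comp_def using bridge_components[OF assms(1-3) anchors] .
  show "reff G s t = rc" if "same_comp ?G' s t"
  proof -
    have "?\<Delta> = 0"
      using eq(2) bridge_potential_del_edge[OF st(1)] bridge_potential_del_edge[OF st(2)] same that by auto
    then show ?thesis using eq(1) by simp
  qed
  show "reff G s t = rc + len G e" if "\<not> same_comp ?G' s t"
  proof -
    have "?\<Delta> = len G e \<or> ?\<Delta> = - len G e"
      using eq(2) bridge_potential_del_edge[OF st(1)] bridge_potential_del_edge[OF st(2)] same that by auto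
    then have "?\<Delta>\<^sup>2 / len G e = len G e" using L by (auto simp: power2_eq_square)
    then show ?thesis using eq(1) by simp
  qed
qed

theorem theorem3p3:
  fixes G :: "('v, 'e) mgraph" and e :: 'e and s t :: "('v, 'e) pt"
  assumes "metrized_graph G" and "e \<in> edges G"
    and "s \<in> points (del_edge G e)" and "t \<in> points (del_edge G e)"
  shows "let p = Vtx (fst (ends G e)); q = Vtx (snd (ends G e)); L = len G e;
             R = reff (del_edge G e) p q; Gc = contract G e;
             rc = reff Gc (cpt G e s) (cpt G e t) in
         (\<not> is_bridge G e \<longrightarrow>
            reff G s t = rc + (L + R) / (L * R) * (jv G p q s - jv G p q t)^2
          \<and> reff G s t = rc + L / (R * (L + R)) * (jv (del_edge G e) p q s - jv (del_edge G e) p q t)^2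
          \<and> reff G s t \<ge> rc
          \<and> (reff G s t = rc \<longleftrightarrow> jv G p q s = jv G p q t))
       \<and> (is_bridge G e \<longrightarrow>
            (same_comp (del_edge G e) s t \<longrightarrow> reff G s t = rc)
          \<and> (\<not> same_comp (del_edge G e) s t \<longrightarrow> reff G s t = rc + L))"
  using reff_contract_nonbridge[OF assms(1,2) _ assms(3,4)] reff_contract_bridge[OF assms(1,2) _ assms(3,4)]
  unfolding Let_def by blast

end
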